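(* Let $0<\alpha<\beta<1$ and let $p$ be a $1$-periodic measurable function on $\mathbb{R}$ with $p>0$ and $p,p^{-1}\in L^\infty(0,1)$. For each $k\in\mathbb{N}$, the eigenvalue $\lambda_k(\theta)$ of $A(\theta)$ is a continuous function of $\theta\in[0,1)$.
   Context: $Q=(0,1)$, $Q_0=(\alpha,\beta)$, $Q_1=(0,\alpha)\cup(\beta,1)$. For $\theta\in[0,1)$, $H^1_\theta(Q)=\{u\in H^1(0,1):u(1)=e^{2\pi i\theta}u(0)\}$ and $V(\theta)=\{v\in H^1_\theta(Q):p v'=0\text{ a.e. on }Q_1\}$. $A(\theta)$ is the self-adjoint operator in the $L^2(Q)$-closure of $V(\theta)$ associated with the closed form $(u,\varphi)\mapsto\int_{Q_0}p\,u'\overline{\varphi'}\,dy$ on $V(\theta)$; its spectrum is discrete, and $\lambda_1(\theta)\le\lambda_2(\theta)\le\dots$ are its eigenvalues counted with multiplicity, equivalently $\lambda_k(\theta)=\inf_{F\subset V(\theta),\,\dim F=k}\ \sup_{u\in F\setminus\{0\}}\int_{Q_0}p|u'|^2dy\big/\|u\|^2_{L^2(Q)}$. *)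

theory Defs
  imports "HOL-Analysis.Analysis"
begin

text \<open>H^1(0,1) (complex valued), via absolute continuity: u is H^1 on [0,1] with weak
  derivative g iff g is square integrable on (0,1) and u(x) = u(0) + int_0^x g for x in [0,1].\<close>
definition is_H1_deriv :: "(real \<Rightarrow> complex) \<Rightarrow> (real \<Rightarrow> complex) \<Rightarrow> bool" where
  "is_H1_deriv u g \<longleftrightarrow>
     g \<in> borel_measurable lebesgue \<and>
     set_integrable lebesgue {0..1} g \<and>
     set_integrable lebesgue {0..1} (\<lambda>x. (cmod (g x))^2) \<and>
     (\<forall>x\<in>{0..1}. u x = u 0 + set_lebesgue_integral lebesgue {0..x} g)"

definition h1_deriv :: "(real \<Rightarrow> complex) \<Rightarrow> (real \<Rightarrow> complex)" where
  "h1_deriv u = (SOME g. is_H1_deriv u g)"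

text \<open>H^1_theta(Q); functions are normalised to vanish outside [0,1] so that they are
  determined by their values on [0,1].\<close>
definition H1_theta :: "real \<Rightarrow> (real \<Rightarrow> complex) set" where
  "H1_theta \<theta> = {u. (\<exists>g. is_H1_deriv u g) \<and> (\<forall>x. x \<notin> {0..1} \<longrightarrow> u x = 0) \<and>
                     u 1 = exp (2 * of_real pi * \<i> * of_real \<theta>) * u 0}"

definition Q1 :: "real \<Rightarrow> real \<Rightarrow> real set" where
  "Q1 \<alpha> \<beta> = {0<..<\<alpha>} \<union> {\<beta><..<1}"

definition Vspace :: "(real \<Rightarrow> real) \<Rightarrow> real \<Rightarrow> real \<Rightarrow> real \<Rightarrow> (real \<Rightarrow> complex) set" where
  "Vspace p \<alpha> \<beta> \<theta> = {u \<in> H1_theta \<theta>. \<exists>g. is_H1_deriv u g \<and>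
        (AE x in lebesgue. x \<in> Q1 \<alpha> \<beta> \<longrightarrow> of_real (p x) * g x = 0)}"

definition energy :: "(real \<Rightarrow> real) \<Rightarrow> real \<Rightarrow> real \<Rightarrow> (real \<Rightarrow> complex) \<Rightarrow> real" where
  "energy p \<alpha> \<beta> u = set_lebesgue_integral lebesgue {\<alpha><..<\<beta>} (\<lambda>x. p x * (cmod (h1_deriv u x))^2)"

definition L2_norm_sq :: "(real \<Rightarrow> complex) \<Rightarrow> real" where
  "L2_norm_sq u = set_lebesgue_integral lebesgue {0<..<1} (\<lambda>x. (cmod (u x))^2)"

definition rayleigh :: "(real \<Rightarrow> real) \<Rightarrow> real \<Rightarrow> real \<Rightarrow> (real \<Rightarrow> complex) \<Rightarrow> real" where
  "rayleigh p \<alpha> \<beta> u = energy p \<alpha> \<beta> u / L2_norm_sq u"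

text \<open>Min-max characterisation: lambda_k(theta) = inf over k-dimensional subspaces F of V(theta)
  (spanned by k linearly independent elements us 0, ..., us (k-1)) of the sup of the Rayleigh
  quotient over nonzero elements of F.\<close>
definition eigenvalue :: "(real \<Rightarrow> real) \<Rightarrow> real \<Rightarrow> real \<Rightarrow> real \<Rightarrow> nat \<Rightarrow> real" where
  "eigenvalue p \<alpha> \<beta> \<theta> k =
     Inf {Sup {rayleigh p \<alpha> \<beta> (\<lambda>x. \<Sum>j<k. c j * us j x) | c :: nat \<Rightarrow> complex. \<exists>j<k. c j \<noteq> 0}
          | us :: nat \<Rightarrow> real \<Rightarrow> complex.
            (\<forall>j<k. us j \<in> Vspace p \<alpha> \<beta> \<theta>) \<and>
            (\<forall>c :: nat \<Rightarrow> complex. (\<forall>x. (\<Sum>j<k. c j * us j x) = 0) \<longrightarrow> (\<forall>j<k. c j = 0))}"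

end

theory Submission
  imports Defs
begin

text \<open>
  For \<open>w = exp (2\<pi>i\<delta>) - 1\<close> let \<open>T u = u + w u(1) \<phi>\<close>, where \<open>\<phi>\<close> rises linearly from 0 to 1
  across \<open>(\<alpha>, \<beta>)\<close>. Then \<open>T\<close> is a linear injection of \<open>V(\<theta>)\<close> into \<open>V(\<theta> + \<delta>)\<close>: it keeps \<open>u(0)\<close>,
  multiplies \<open>u(1)\<close> by \<open>exp (2\<pi>i\<delta>)\<close> and changes \<open>u'\<close> only by a constant on \<open>(\<alpha>, \<beta>)\<close>.
  Elements of \<open>V(\<theta>)\<close> are constant on \<open>(\<beta>, 1)\<close>, so \<open>(1 - \<beta>) |u(1)|\<^sup>2 \<le> \<parallel>u\<parallel>\<^sup>2\<close>, and the
  Peter--Paul inequality with \<open>\<eta> = |w|\<close> shows that \<open>T\<close> changes the \<open>L\<^sup>2\<close> norm and (using only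
  an upper bound for \<open>p\<close>) the energy by relative errors \<open>O(\<eta>)\<close>. Hence
  \<open>R(T u) \<le> A(\<eta>) R(u) + B(\<eta>)\<close> with \<open>A \<rightarrow> 1\<close> and \<open>B \<rightarrow> 0\<close>. Applying \<open>T\<close> to a \<open>k\<close>-dimensional
  trial space in the min-max formula gives \<open>\<lambda>\<^sub>k(\<theta> + \<delta>) \<le> A \<lambda>\<^sub>k(\<theta>) + B\<close>, and the same
  holds with \<open>\<theta>\<close> and \<open>\<theta> + \<delta>\<close> exchanged; continuity follows by squeezing.
\<close>

section \<open>Integrals on the line\<close>

lemma sigma_finite_lebesgue: "sigma_finite_measure (lebesgue :: real measure)"
proof
  show "\<exists>A. countable A \<and> A \<subseteq> sets (lebesgue::real measure) \<and> \<Union> A = space lebesgue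
          \<and> (\<forall>a\<in>A. emeasure lebesgue a \<noteq> \<infinity>)"
  proof (intro exI[of _ "range (\<lambda>n::nat. {-real n..real n})"] conjI)
    show "\<Union> (range (\<lambda>n::nat. {-real n..real n})) = space lebesgue"
    proof auto
      fix x :: real
      obtain n :: nat where "\<bar>x\<bar> \<le> real n" using real_arch_simple by blast
      then show "\<exists>n::nat. - real n \<le> x \<and> x \<le> real n" by (intro exI[of _ n]) auto
    qed
  qed auto
qed

lemma set_integral_borel_eq_0_of_Ioi:
  fixes F :: "real \<Rightarrow> 'b::{banach, second_countable_topology}"
  assumes F: "integrable lebesgue F" and total: "integral\<^sup>L lebesgue F = 0"
    and rays: "\<And>x. set_lebesgue_integral lebesgue {x<..} F = 0"
    and A: "A \<in> sets borel"
  shows "set_lebesgue_integral lebesgue A F = 0"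
proof -
  have "Int_stable (range (greaterThan :: real \<Rightarrow> real set))"
    unfolding Int_stable_def by (auto intro: image_eqI[of _ _ "max _ _"])
  moreover have "range (greaterThan :: real \<Rightarrow> real set) \<subseteq> Pow UNIV" by auto
  moreover have "A \<in> sigma_sets UNIV (range greaterThan)"
    using A unfolding borel_Ioi by simp
  ultimately show ?thesis
  proof (induction rule: sigma_sets_induct_disjoint)
    case (basic A) then show ?case using rays by auto
  next
    case empty then show ?case by (simp add: set_lebesgue_integral_def)
  next
    case (compl A)
    then have "A \<in> sets borel" unfolding borel_Ioi by simp
    then have A: "A \<in> sets lebesgue" by simp
    have "(\<lambda>x. indicat_real (UNIV - A) x *\<^sub>R F x) = (\<lambda>x. F x - indicat_real A x *\<^sub>R F x)"
      by (auto simp: indicator_def)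
    then have "set_lebesgue_integral lebesgue (UNIV - A) F
        = integral\<^sup>L lebesgue F - set_lebesgue_integral lebesgue A F"
      unfolding set_lebesgue_integral_def
      using Bochner_Integration.integral_diff[OF F integrable_mult_indicator[OF A F]] by simp
    then show ?case using compl total by simp
  next
    case (union A)
    then have "\<And>i. A i \<in> sets borel" unfolding borel_Ioi by auto
    then have A: "\<And>i. A i \<in> sets lebesgue" by simp
    then have "set_integrable lebesgue (\<Union>i. A i) F"
      unfolding set_integrable_def by (intro integrable_mult_indicator F) auto
    then have "set_lebesgue_integral lebesgue (\<Union>i. A i) F = (\<Sum>i. set_lebesgue_integral lebesgue (A i) F)"
      using union(1) by (intro lebesgue_integral_countable_add[OF A]) (auto simp: disjoint_family_on_def)
    then show ?case using union by simp
  qed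
qed

lemma AE_eq_0_of_set_integral_Ioi:
  fixes F :: "real \<Rightarrow> 'b::{banach, second_countable_topology}"
  assumes F: "integrable lebesgue F" and total: "integral\<^sup>L lebesgue F = 0"
    and rays: "\<And>x. set_lebesgue_integral lebesgue {x<..} F = 0"
  shows "AE x in lebesgue. F x = 0"
proof (rule sigma_finite_measure.density_zero[OF sigma_finite_lebesgue F])
  fix A :: "real set" assume A: "A \<in> sets lebesgue"
  then obtain S N N' :: "real set"
    where SN: "A = S \<union> N" "N \<subseteq> N'" "N' \<in> null_sets lborel" "S \<in> sets borel"
    by (auto elim: sets_completionE)
  have "AE x in lebesgue. x \<notin> N'"
    using SN(3) by (simp add: AE_not_in null_sets_completionI)
  then have "AE x in lebesgue. indicat_real A x *\<^sub>R F x = indicat_real S x *\<^sub>R F x"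
    by eventually_elim (use SN in \<open>auto simp: indicator_def\<close>)
  moreover have "S \<in> sets lebesgue" using SN(4) by simp
  ultimately have "set_lebesgue_integral lebesgue A F = set_lebesgue_integral lebesgue S F"
    unfolding set_lebesgue_integral_def using A
    by (intro integral_cong_AE) (auto intro: borel_measurable_integrable integrable_mult_indicator F)
  also have "\<dots> = 0" by (rule set_integral_borel_eq_0_of_Ioi[OF F total rays SN(4)])
  finally show "set_lebesgue_integral lebesgue A F = 0" .
qed

lemma set_integral_split_at:
  fixes f :: "real \<Rightarrow> 'b::{banach, second_countable_topology}"
  assumes f: "set_integrable lebesgue {a..b} f" and x: "a \<le> x" "x \<le> b"
  shows "set_lebesgue_integral lebesgue {a..b} f
       = set_lebesgue_integral lebesgue {a..x} f + set_lebesgue_integral lebesgue {x<..b} f"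
proof -
  have "{a..b} = {a..x} \<union> {x<..b}" using x by auto
  moreover have "set_lebesgue_integral lebesgue ({a..x} \<union> {x<..b}) f
       = set_lebesgue_integral lebesgue {a..x} f + set_lebesgue_integral lebesgue {x<..b} f"
    using x by (intro set_integral_Un) (auto intro!: set_integrable_subset[OF f])
  ultimately show ?thesis by simp
qed

lemma AE_eq_0_of_primitive_eq_0:
  fixes f :: "real \<Rightarrow> 'b::{banach, second_countable_topology}"
  assumes f: "set_integrable lebesgue {a..b} f"
    and primitive: "\<And>x. x \<in> {a..b} \<Longrightarrow> set_lebesgue_integral lebesgue {a..x} f = 0"
  shows "AE x in lebesgue. x \<in> {a..b} \<longrightarrow> f x = 0"
proof -
  define F where "F x = indicat_real {a..b} x *\<^sub>R f x" for x
  have F: "integrable lebesgue F" using f unfolding F_def set_integrable_def .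
  have whole: "set_lebesgue_integral lebesgue {a..b} f = 0"
  proof (cases "a \<le> b")
    case False then show ?thesis by (simp add: set_lebesgue_integral_def)
  qed (use primitive[of b] in auto)
  have "set_lebesgue_integral lebesgue {x<..} F = set_lebesgue_integral lebesgue ({x<..} \<inter> {a..b}) f" for x
    unfolding F_def set_lebesgue_integral_def
    by (rule Bochner_Integration.integral_cong) (simp_all split: split_indicator)
  moreover have "set_lebesgue_integral lebesgue ({x<..} \<inter> {a..b}) f = 0" for x
  proof -
    consider "x < a" | "a \<le> x" "x < b" | "b \<le> x" by linarith
    then show ?thesis
    proof cases
      case 1
      then have "{x<..} \<inter> {a..b} = {a..b}" by auto
      then show ?thesis using whole by simp
    next
      case 2
      then have "{x<..} \<inter> {a..b} = {x<..b}" by auto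
      then show ?thesis
        using set_integral_split_at[OF f, of x] whole primitive[of x] 2 by simp
    next
      case 3
      then have "{x<..} \<inter> {a..b} = {}" by auto
      then show ?thesis by (simp add: set_lebesgue_integral_def)
    qed
  qed
  moreover have "integral\<^sup>L lebesgue F = 0"
    using whole by (simp add: F_def[abs_def] set_lebesgue_integral_def)
  ultimately have "AE x in lebesgue. F x = 0"
    by (intro AE_eq_0_of_set_integral_Ioi[OF F]) simp_all
  then show ?thesis by eventually_elim (simp add: F_def indicator_def)
qed

text \<open>Peter--Paul inequality; since \<open>1 / 0 = 0\<close>, the case \<open>\<eta> = 0\<close> needs \<open>b = 0\<close>.\<close>

lemma norm_add_sq_le:
  fixes a b :: "'a::real_normed_vector"
  assumes "\<eta> \<ge> 0" and "\<eta> = 0 \<longrightarrow> b = 0"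
  shows "(norm (a + b))\<^sup>2 \<le> (1 + \<eta>) * (norm a)\<^sup>2 + (1 + 1 / \<eta>) * (norm b)\<^sup>2"
proof (cases "\<eta> = 0")
  case True then show ?thesis using assms by simp
next
  case False
  then have \<eta>: "\<eta> > 0" using assms by simp
  have "0 \<le> (\<eta> * norm a - norm b)\<^sup>2 / \<eta>" using \<eta> by simp
  also have "\<dots> = \<eta> * (norm a)\<^sup>2 - 2 * norm a * norm b + (norm b)\<^sup>2 / \<eta>"
    using \<eta> by (simp add: power2_eq_square field_simps)
  finally have "(norm a + norm b)\<^sup>2 \<le> (1 + \<eta>) * (norm a)\<^sup>2 + (1 + 1 / \<eta>) * (norm b)\<^sup>2"
    by (simp add: power2_eq_square algebra_simps)
  moreover have "(norm (a + b))\<^sup>2 \<le> (norm a + norm b)\<^sup>2"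
    by (intro power_mono norm_triangle_ineq) simp
  ultimately show ?thesis by linarith
qed

lemma norm_sum_sq_le:
  fixes z :: "'i \<Rightarrow> 'a::real_normed_vector"
  assumes "finite A"
  shows "(norm (\<Sum>j\<in>A. z j))\<^sup>2 \<le> card A * (\<Sum>j\<in>A. (norm (z j))\<^sup>2)"
proof -
  have "(norm (\<Sum>j\<in>A. z j))\<^sup>2 \<le> (\<Sum>j\<in>A. norm (z j))\<^sup>2"
    by (intro power_mono norm_sum) simp
  also have "\<dots> \<le> (\<Sum>j\<in>A. (norm (z j))\<^sup>2) * card A"
    by (rule sum_squared_le_sum_of_squares)
  finally show ?thesis by (simp add: mult.commute)
qed

lemma set_integrable_sum:
  fixes f :: "'i \<Rightarrow> 'a \<Rightarrow> 'b::{banach, second_countable_topology}"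
  assumes "finite I" and "\<And>i. i \<in> I \<Longrightarrow> set_integrable M A (f i)"
  shows "set_integrable M A (\<lambda>x. \<Sum>i\<in>I. f i x)"
  using assms unfolding set_integrable_def scaleR_sum_right by (intro Bochner_Integration.integrable_sum) auto

lemma set_integral_sum:
  fixes f :: "'i \<Rightarrow> 'a \<Rightarrow> 'b::{banach, second_countable_topology}"
  assumes "finite I" and "\<And>i. i \<in> I \<Longrightarrow> set_integrable M A (f i)"
  shows "set_lebesgue_integral M A (\<lambda>x. \<Sum>i\<in>I. f i x) = (\<Sum>i\<in>I. set_lebesgue_integral M A (f i))"
  using assms unfolding set_integrable_def set_lebesgue_integral_def scaleR_sum_right
  by (intro Bochner_Integration.integral_sum) auto

lemma set_borel_measurable_lebesgue:
  fixes f :: "real \<Rightarrow> 'b::{banach, second_countable_topology}"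
  assumes "f \<in> borel_measurable lebesgue" "A \<in> sets lebesgue"
  shows "set_borel_measurable lebesgue A f"
  unfolding set_borel_measurable_def
  by (rule borel_measurable_scaleR[OF borel_measurable_indicator[OF assms(2)] assms(1)])

lemma set_integrable_bounded:
  fixes f :: "real \<Rightarrow> 'b::{banach, second_countable_topology}"
  assumes "f \<in> borel_measurable lebesgue" "\<And>x. norm (f x) \<le> B"
  shows "set_integrable lebesgue {a..b} f"
proof (rule set_integrable_bound)
  show "set_integrable lebesgue {a..b} (\<lambda>_. B)"
    by (rule absolutely_integrable_on_const) simp
  show "set_borel_measurable lebesgue {a..b} f"
    using assms(1) by (rule set_borel_measurable_lebesgue) simp
  show "AE x in lebesgue. x \<in> {a..b} \<longrightarrow> norm (f x) \<le> norm B"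
    using assms(2) by (intro AE_I2 impI) (auto intro: order_trans[OF _ abs_ge_self])
qed

section \<open>Weak derivatives and the energy\<close>

lemma is_H1_derivD:
  assumes "is_H1_deriv u g"
  shows "g \<in> borel_measurable lebesgue" "set_integrable lebesgue {0..1} g"
    "set_integrable lebesgue {0..1} (\<lambda>x. (cmod (g x))\<^sup>2)"
    "\<And>x. x \<in> {0..1} \<Longrightarrow> u x = u 0 + set_lebesgue_integral lebesgue {0..x} g"
  using assms unfolding is_H1_deriv_def by blast+

lemma is_H1_deriv_unique:
  assumes "is_H1_deriv u g" "is_H1_deriv u h"
  shows "AE x in lebesgue. x \<in> {0..1} \<longrightarrow> g x = h x"
proof -
  note g = is_H1_derivD[OF assms(1)] and h = is_H1_derivD[OF assms(2)]
  have "AE x in lebesgue. x \<in> {0..1} \<longrightarrow> g x - h x = 0"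
  proof (rule AE_eq_0_of_primitive_eq_0)
    show "set_integrable lebesgue {0..1} (\<lambda>x. g x - h x)"
      using g(2) h(2) by (rule set_integral_diff(1))
    fix x :: real assume x: "x \<in> {0..1}"
    have "set_integrable lebesgue {0..x} g" "set_integrable lebesgue {0..x} h"
      using x by (auto intro: set_integrable_subset[OF g(2)] set_integrable_subset[OF h(2)])
    moreover have "set_lebesgue_integral lebesgue {0..x} g = set_lebesgue_integral lebesgue {0..x} h"
      using g(4)[OF x] h(4)[OF x] by simp
    ultimately show "set_lebesgue_integral lebesgue {0..x} (\<lambda>x. g x - h x) = 0"
      by simp
  qed
  then show ?thesis by eventually_elim auto
qed

lemma is_H1_deriv_h1_deriv:
  assumes "is_H1_deriv u g"
  shows "is_H1_deriv u (h1_deriv u)"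
  unfolding h1_deriv_def using assms by (rule someI[where P = "is_H1_deriv u"])

lemma is_H1_deriv_lincomb:
  assumes u: "is_H1_deriv u g" and v: "is_H1_deriv v h"
  shows "is_H1_deriv (\<lambda>x. a * u x + b * v x) (\<lambda>x. a * g x + b * h x)"
  unfolding is_H1_deriv_def
proof (intro conjI ballI)
  note g = is_H1_derivD[OF u] and h = is_H1_derivD[OF v]
  note [measurable] = g(1) h(1)
  show "(\<lambda>x. a * g x + b * h x) \<in> borel_measurable lebesgue" by measurable
  show "set_integrable lebesgue {0..1} (\<lambda>x. a * g x + b * h x)"
    using g(2) h(2) by (intro set_integral_add(1) set_integrable_mult_right)
  show "set_integrable lebesgue {0..1} (\<lambda>x. (cmod (a * g x + b * h x))\<^sup>2)"
  proof (rule set_integrable_bound)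
    show "set_integrable lebesgue {0..1} (\<lambda>x. 2 * (cmod a)\<^sup>2 * (cmod (g x))\<^sup>2 + 2 * (cmod b)\<^sup>2 * (cmod (h x))\<^sup>2)"
      using g(3) h(3) by (intro set_integral_add(1) set_integrable_mult_right)
    show "set_borel_measurable lebesgue {0..1} (\<lambda>x. (cmod (a * g x + b * h x))\<^sup>2)"
      by (rule set_borel_measurable_lebesgue) (measurable, simp)
    have "(cmod (a * g x + b * h x))\<^sup>2 \<le> 2 * (cmod a)\<^sup>2 * (cmod (g x))\<^sup>2 + 2 * (cmod b)\<^sup>2 * (cmod (h x))\<^sup>2" for x
      using norm_add_sq_le[of 1 "a * g x" "b * h x"] by (simp add: norm_mult power_mult_distrib ac_simps)
    then show "AE x in lebesgue. x \<in> {0..1} \<longrightarrow> norm ((cmod (a * g x + b * h x))\<^sup>2)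
        \<le> norm (2 * (cmod a)\<^sup>2 * (cmod (g x))\<^sup>2 + 2 * (cmod b)\<^sup>2 * (cmod (h x))\<^sup>2)"
      by (intro AE_I2) simp
  qed
  fix x :: real assume x: "x \<in> {0..1}"
  have "set_integrable lebesgue {0..x} g" "set_integrable lebesgue {0..x} h"
    using x by (auto intro!: set_integrable_subset[OF g(2)] set_integrable_subset[OF h(2)])
  then show "a * u x + b * v x
      = a * u 0 + b * v 0 + set_lebesgue_integral lebesgue {0..x} (\<lambda>x. a * g x + b * h x)"
    using g(4)[OF x] h(4)[OF x] by (simp add: algebra_simps)
qed

lemma is_H1_deriv_sum:
  fixes k :: nat
  assumes "\<And>j. j < k \<Longrightarrow> is_H1_deriv (us j) (gs j)"
  shows "is_H1_deriv (\<lambda>x. \<Sum>j<k. c j * us j x) (\<lambda>x. \<Sum>j<k. c j * gs j x)"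
  using assms
proof (induction k)
  case 0 then show ?case by (simp add: is_H1_deriv_def set_integrable_def)
next
  case (Suc k)
  then show ?case
    using is_H1_deriv_lincomb[of "\<lambda>x. \<Sum>j<k. c j * us j x" "\<lambda>x. \<Sum>j<k. c j * gs j x" "us k" "gs k" 1 "c k"]
    by simp
qed

lemma continuous_on_H1:
  assumes u: "is_H1_deriv u g"
  shows "continuous_on {0..1} u"
proof -
  note g = is_H1_derivD[OF u]
  have "g integrable_on {0..1}" using set_lebesgue_integral_eq_integral(1)[OF g(2)] .
  then have "continuous_on {0..1} (\<lambda>x. u 0 + integral {0..x} g)"
    by (intro continuous_intros indefinite_integral_continuous_1)
  moreover have "u 0 + integral {0..x} g = u x" if x: "x \<in> {0..1}" for x
  proof -
    have "set_integrable lebesgue {0..x} g"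
      using x by (auto intro!: set_integrable_subset[OF g(2)])
    then show ?thesis using g(4)[OF x] by (simp add: set_lebesgue_integral_eq_integral(2))
  qed
  ultimately show ?thesis using continuous_on_eq by blast
qed

lemma set_integrable_sq_H1:
  assumes "is_H1_deriv u g"
  shows "set_integrable lebesgue {0<..<1} (\<lambda>x. (cmod (u x))\<^sup>2)"
proof -
  have "continuous_on {0..1} (\<lambda>x. (cmod (u x))\<^sup>2)"
    using continuous_on_H1[OF assms] by (intro continuous_intros)
  then have "set_integrable lebesgue {0..1} (\<lambda>x. (cmod (u x))\<^sup>2)"
    by (rule absolutely_integrable_continuous_real)
  then show ?thesis by (rule set_integrable_subset) auto
qed

lemma L2_norm_sq_nonneg: "L2_norm_sq u \<ge> 0"
  unfolding L2_norm_sq_def set_lebesgue_integral_def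
  by (intro Bochner_Integration.integral_nonneg) auto

lemma L2_norm_sq_pos:
  assumes u: "is_H1_deriv u g" and "x \<in> {0..1}" "u x \<noteq> 0"
  shows "L2_norm_sq u > 0"
proof -
  have c: "continuous_on {0..1} (\<lambda>x. (cmod (u x))\<^sup>2)"
    using continuous_on_H1[OF u] by (intro continuous_intros)
  have "L2_norm_sq u = integral {0<..<1} (\<lambda>x. (cmod (u x))\<^sup>2)"
    unfolding L2_norm_sq_def by (rule set_lebesgue_integral_eq_integral(2)[OF set_integrable_sq_H1[OF u]])
  also have "\<dots> = integral {0..1} (\<lambda>x. (cmod (u x))\<^sup>2)"
    by (simp add: integral_open_interval_real)
  finally have "L2_norm_sq u = integral {0..1} (\<lambda>x. (cmod (u x))\<^sup>2)" .
  moreover have "integral {0..1} (\<lambda>x. (cmod (u x))\<^sup>2) \<noteq> 0"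
    using integral_eq_0_iff[OF c] assms(2,3) by auto
  moreover have "integral {0..1} (\<lambda>x. (cmod (u x))\<^sup>2) \<ge> 0"
    by (intro integral_nonneg integrable_continuous_real c) auto
  ultimately show ?thesis by linarith
qed

lemma L2_norm_sq_scale: "L2_norm_sq (\<lambda>x. a * u x) = (cmod a)\<^sup>2 * L2_norm_sq u"
  unfolding L2_norm_sq_def by (simp add: norm_mult power_mult_distrib)

lemma L2_norm_sq_add_le:
  assumes "is_H1_deriv u g" "is_H1_deriv v h"
  shows "L2_norm_sq (\<lambda>x. u x + v x) \<le> 2 * L2_norm_sq u + 2 * L2_norm_sq v"
proof -
  note iu = set_integrable_sq_H1[OF assms(1)] and iv = set_integrable_sq_H1[OF assms(2)]
  have "L2_norm_sq (\<lambda>x. u x + v x)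
      \<le> set_lebesgue_integral lebesgue {0<..<1} (\<lambda>x. 2 * (cmod (u x))\<^sup>2 + 2 * (cmod (v x))\<^sup>2)"
    unfolding L2_norm_sq_def
  proof (rule set_integral_mono)
    show "set_integrable lebesgue {0<..<1} (\<lambda>x. (cmod (u x + v x))\<^sup>2)"
      using set_integrable_sq_H1[OF is_H1_deriv_lincomb[OF assms, of 1 1]] by simp
    show "set_integrable lebesgue {0<..<1} (\<lambda>x. 2 * (cmod (u x))\<^sup>2 + 2 * (cmod (v x))\<^sup>2)"
      using iu iv by (intro set_integral_add(1) set_integrable_mult_right)
  qed (use norm_add_sq_le[of 1] in simp)
  also have "\<dots> = 2 * L2_norm_sq u + 2 * L2_norm_sq v"
    unfolding L2_norm_sq_def using iu iv by simp
  finally show ?thesis .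
qed

lemma energy_nonneg:
  assumes "\<forall>x. p x > 0"
  shows "energy p \<alpha> \<beta> u \<ge> 0"
  unfolding energy_def set_lebesgue_integral_def
  using assms by (intro Bochner_Integration.integral_nonneg) (simp add: less_imp_le)

lemma rayleigh_nonneg: "\<forall>x. p x > 0 \<Longrightarrow> rayleigh p \<alpha> \<beta> u \<ge> 0"
  unfolding rayleigh_def by (simp add: energy_nonneg L2_norm_sq_nonneg)

lemma energy_eq_integral:
  assumes u: "is_H1_deriv u g" and "0 \<le> \<alpha>" "\<beta> \<le> 1"
    and [measurable]: "p \<in> borel_measurable lebesgue"
  shows "energy p \<alpha> \<beta> u = set_lebesgue_integral lebesgue {\<alpha><..<\<beta>} (\<lambda>x. p x * (cmod (g x))\<^sup>2)"
  unfolding energy_def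
proof (rule set_lebesgue_integral_cong_AE)
  have h: "is_H1_deriv u (h1_deriv u)" by (rule is_H1_deriv_h1_deriv[OF u])
  show "AE x in lebesgue. x \<in> {\<alpha><..<\<beta>} \<longrightarrow> p x * (cmod (h1_deriv u x))\<^sup>2 = p x * (cmod (g x))\<^sup>2"
    using is_H1_deriv_unique[OF h u] by eventually_elim (use assms in auto)
  note [measurable] = is_H1_derivD(1)[OF u] is_H1_derivD(1)[OF h]
  show "(\<lambda>x. p x * (cmod (h1_deriv u x))\<^sup>2) \<in> borel_measurable lebesgue" by measurable
  show "(\<lambda>x. p x * (cmod (g x))\<^sup>2) \<in> borel_measurable lebesgue" by measurable
qed simp

lemma set_integrable_weighted_sq:
  fixes h :: "real \<Rightarrow> complex"
  assumes [measurable]: "p \<in> borel_measurable lebesgue" "h \<in> borel_measurable lebesgue"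
    and pM: "AE x in lebesgue. x \<in> {0<..<1} \<longrightarrow> p x \<le> M" and "\<forall>x. p x > 0"
    and h: "set_integrable lebesgue {0..1} (\<lambda>x. (cmod (h x))\<^sup>2)"
    and "0 \<le> \<alpha>" "\<beta> \<le> 1"
  shows "set_integrable lebesgue {\<alpha><..<\<beta>} (\<lambda>x. p x * (cmod (h x))\<^sup>2)"
proof (rule set_integrable_bound)
  show "set_integrable lebesgue {\<alpha><..<\<beta>} (\<lambda>x. M * (cmod (h x))\<^sup>2)"
    using assms by (intro set_integrable_mult_right set_integrable_subset[OF h]) auto
  show "set_borel_measurable lebesgue {\<alpha><..<\<beta>} (\<lambda>x. p x * (cmod (h x))\<^sup>2)"
    by (rule set_borel_measurable_lebesgue) (measurable, simp)
  show "AE x in lebesgue. x \<in> {\<alpha><..<\<beta>} \<longrightarrow> norm (p x * (cmod (h x))\<^sup>2) \<le> norm (M * (cmod (h x))\<^sup>2)"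
    using pM
  proof eventually_elim
    case (elim x)
    moreover have "p x > 0" using assms by blast
    ultimately show ?case using \<open>0 \<le> \<alpha>\<close> \<open>\<beta> \<le> 1\<close> by (auto simp: abs_mult intro!: mult_right_mono)
  qed
qed

lemma set_integral_weight_le:
  fixes p :: "real \<Rightarrow> real"
  assumes "p \<in> borel_measurable lebesgue"
    and pM: "AE x in lebesgue. x \<in> {0<..<1} \<longrightarrow> p x \<le> M" and "\<forall>x. p x > 0"
    and "0 \<le> \<alpha>" "\<alpha> \<le> \<beta>" "\<beta> \<le> 1"
  shows "set_integrable lebesgue {\<alpha><..<\<beta>} p"
    and "set_lebesgue_integral lebesgue {\<alpha><..<\<beta>} p \<le> M * (\<beta> - \<alpha>)"
proof -
  have M: "set_integrable lebesgue {\<alpha><..<\<beta>} (\<lambda>_. M)"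
    by (rule absolutely_integrable_on_const) simp
  have ae: "AE x in lebesgue. x \<in> {\<alpha><..<\<beta>} \<longrightarrow> p x \<le> M"
    using pM by eventually_elim (use assms in auto)
  show p: "set_integrable lebesgue {\<alpha><..<\<beta>} p"
  proof (rule set_integrable_bound[OF M])
    show "set_borel_measurable lebesgue {\<alpha><..<\<beta>} p"
      using assms(1) by (rule set_borel_measurable_lebesgue) simp
    show "AE x in lebesgue. x \<in> {\<alpha><..<\<beta>} \<longrightarrow> norm (p x) \<le> norm M"
      using ae
    proof eventually_elim
      case (elim x)
      moreover have "p x > 0" using assms by blast
      ultimately show ?case by auto
    qed
  qed
  have "set_lebesgue_integral lebesgue {\<alpha><..<\<beta>} p \<le> set_lebesgue_integral lebesgue {\<alpha><..<\<beta>} (\<lambda>_. M)"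
    using ae by (intro set_integral_mono_AE[OF p M]) simp
  also have "\<dots> = measure lebesgue {\<alpha><..<\<beta>} *\<^sub>R M"
    by (rule set_integral_const) (use assms in simp_all)
  also have "\<dots> = M * (\<beta> - \<alpha>)"
    using assms by simp
  finally show "set_lebesgue_integral lebesgue {\<alpha><..<\<beta>} p \<le> M * (\<beta> - \<alpha>)" .
qed

section \<open>The space V(\<theta>)\<close>

lemma exp_eq_cis: "exp (2 * of_real pi * \<i> * of_real \<theta>) = cis (2 * pi * \<theta>)"
  by (simp add: cis_conv_exp mult_ac)

lemma Vspace_iff:
  assumes "\<forall>x. p x > 0"
  shows "u \<in> Vspace p \<alpha> \<beta> \<theta> \<longleftrightarrow>
    (\<exists>g. is_H1_deriv u g \<and> (AE x in lebesgue. x \<in> Q1 \<alpha> \<beta> \<longrightarrow> g x = 0)) \<and>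
    (\<forall>x. x \<notin> {0..1} \<longrightarrow> u x = 0) \<and> u 1 = cis (2 * pi * \<theta>) * u 0"
proof -
  have "p x \<noteq> 0" for x using assms by (metis less_irrefl)
  then show ?thesis by (auto simp: Vspace_def H1_theta_def exp_eq_cis)
qed

lemma VspaceE:
  assumes "u \<in> Vspace p \<alpha> \<beta> \<theta>" "\<forall>x. p x > 0"
  obtains g where "is_H1_deriv u g" "AE x in lebesgue. x \<in> Q1 \<alpha> \<beta> \<longrightarrow> g x = 0"
    "\<And>x. x \<notin> {0..1} \<Longrightarrow> u x = 0" "u 1 = cis (2 * pi * \<theta>) * u 0"
  using assms Vspace_iff by blast

lemma Vspace_vanishes_outside: "u \<in> Vspace p \<alpha> \<beta> \<theta> \<Longrightarrow> \<forall>x. p x > 0 \<Longrightarrow> x \<notin> {0..1} \<Longrightarrow> u x = 0"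
  by (elim VspaceE)

lemma Vspace_boundary_condition: "u \<in> Vspace p \<alpha> \<beta> \<theta> \<Longrightarrow> \<forall>x. p x > 0 \<Longrightarrow> u 1 = cis (2 * pi * \<theta>) * u 0"
  by (elim VspaceE)

lemma ex_Vspace_derivs:
  fixes k :: nat
  assumes "\<forall>j<k. us j \<in> Vspace p \<alpha> \<beta> \<theta>" "\<forall>x. p x > 0"
  shows "\<exists>gs. \<forall>j<k. is_H1_deriv (us j) (gs j) \<and> (AE x in lebesgue. x \<in> Q1 \<alpha> \<beta> \<longrightarrow> gs j x = 0)"
proof -
  have "\<forall>j\<in>{..<k}. \<exists>g. is_H1_deriv (us j) g \<and> (AE x in lebesgue. x \<in> Q1 \<alpha> \<beta> \<longrightarrow> g x = 0)"
    using assms Vspace_iff by blast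
  from bchoice[OF this] show ?thesis by auto
qed

definition lincomb :: "nat \<Rightarrow> (nat \<Rightarrow> real \<Rightarrow> complex) \<Rightarrow> (nat \<Rightarrow> complex) \<Rightarrow> real \<Rightarrow> complex" where
  "lincomb k us c = (\<lambda>x. \<Sum>j<k. c j * us j x)"

lemma Vspace_lincomb:
  fixes k :: nat
  assumes us: "\<forall>j<k. us j \<in> Vspace p \<alpha> \<beta> \<theta>" and p: "\<forall>x. p x > 0"
  shows "lincomb k us c \<in> Vspace p \<alpha> \<beta> \<theta>"
proof -
  obtain gs where gs: "\<forall>j<k. is_H1_deriv (us j) (gs j) \<and> (AE x in lebesgue. x \<in> Q1 \<alpha> \<beta> \<longrightarrow> gs j x = 0)"
    using ex_Vspace_derivs[OF us p] by blast
  have "is_H1_deriv (lincomb k us c) (\<lambda>x. \<Sum>j<k. c j * gs j x)"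
    unfolding lincomb_def using gs by (intro is_H1_deriv_sum) blast
  moreover have "AE x in lebesgue. x \<in> Q1 \<alpha> \<beta> \<longrightarrow> (\<Sum>j<k. c j * gs j x) = 0"
  proof -
    have "AE x in lebesgue. \<forall>j\<in>{..<k}. x \<in> Q1 \<alpha> \<beta> \<longrightarrow> gs j x = 0"
      using gs by (intro eventually_ball_finite) auto
    then show ?thesis by eventually_elim simp
  qed
  moreover have "lincomb k us c x = 0" if "x \<notin> {0..1}" for x
    unfolding lincomb_def using that us Vspace_vanishes_outside[OF _ p] by (intro sum.neutral) auto
  moreover have "lincomb k us c 1 = cis (2 * pi * \<theta>) * lincomb k us c 0"
    unfolding lincomb_def sum_distrib_left
  proof (intro sum.cong refl)
    fix j assume "j \<in> {..<k}"
    then have "us j \<in> Vspace p \<alpha> \<beta> \<theta>" using us by simp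
    then have "us j 1 = cis (2 * pi * \<theta>) * us j 0"
      using p by (rule Vspace_boundary_condition)
    then show "c j * us j 1 = cis (2 * pi * \<theta>) * (c j * us j 0)" by (simp add: mult.left_commute)
  qed
  ultimately show ?thesis unfolding Vspace_iff[OF p] by blast
qed

lemma Vspace_const_on_right:
  assumes u: "u \<in> Vspace p \<alpha> \<beta> \<theta>" and p: "\<forall>x. p x > 0"
    and "0 \<le> \<beta>" "\<beta> \<le> x" "x \<le> 1"
  shows "u x = u 1"
proof -
  obtain g where g: "is_H1_deriv u g" and ae: "AE x in lebesgue. x \<in> Q1 \<alpha> \<beta> \<longrightarrow> g x = 0"
    using VspaceE[OF u p] by blast
  note gD = is_H1_derivD[OF g]
  have "AE y in lebesgue. y \<notin> {1::real}" by (rule AE_not_in) simp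
  then have "AE y in lebesgue. indicat_real {x<..1} y *\<^sub>R g y = 0"
    using ae
    by eventually_elim (use assms in \<open>auto simp: Q1_def indicator_def\<close>)
  then have "set_lebesgue_integral lebesgue {x<..1} g = 0"
    unfolding set_lebesgue_integral_def by (rule integral_eq_zero_AE)
  then show ?thesis
    using gD(4)[of 1] gD(4)[of x] set_integral_split_at[OF gD(2), of x] assms by simp
qed

lemma Vspace_boundary_value_le:
  assumes u: "u \<in> Vspace p \<alpha> \<beta> \<theta>" and p: "\<forall>x. p x > 0" and "0 \<le> \<beta>" "\<beta> < 1"
  shows "(1 - \<beta>) * (cmod (u 1))\<^sup>2 \<le> L2_norm_sq u"
proof -
  obtain g where g: "is_H1_deriv u g" using VspaceE[OF u p] by blast
  note i = set_integrable_sq_H1[OF g]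
  have "(1 - \<beta>) * (cmod (u 1))\<^sup>2 = measure lebesgue {\<beta><..<1} *\<^sub>R (cmod (u 1))\<^sup>2"
    using assms by simp
  also have "\<dots> = set_lebesgue_integral lebesgue {\<beta><..<1} (\<lambda>x. (cmod (u 1))\<^sup>2)"
    by (rule set_integral_const[symmetric]) (use assms in simp_all)
  also have "\<dots> = set_lebesgue_integral lebesgue {\<beta><..<1} (\<lambda>x. (cmod (u x))\<^sup>2)"
  proof (rule set_lebesgue_integral_cong)
    have "u x = u 1" if "x \<in> {\<beta><..<1}" for x
      using that by (intro Vspace_const_on_right[OF u p \<open>0 \<le> \<beta>\<close>]) auto
    then show "\<forall>x. x \<in> {\<beta><..<1} \<longrightarrow> (cmod (u 1))\<^sup>2 = (cmod (u x))\<^sup>2"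
      by simp
  qed simp
  also have "\<dots> \<le> L2_norm_sq u"
    unfolding L2_norm_sq_def set_lebesgue_integral_def
  proof (rule integral_mono)
    show "integrable lebesgue (\<lambda>x. indicat_real {\<beta><..<1} x *\<^sub>R (cmod (u x))\<^sup>2)"
      using set_integrable_subset[OF i, of "{\<beta><..<1}"] \<open>0 \<le> \<beta>\<close>
      unfolding set_integrable_def by fastforce
    show "integrable lebesgue (\<lambda>x. indicat_real {0<..<1} x *\<^sub>R (cmod (u x))\<^sup>2)"
      using i unfolding set_integrable_def .
    show "indicat_real {\<beta><..<1} x *\<^sub>R (cmod (u x))\<^sup>2 \<le> indicat_real {0<..<1} x *\<^sub>R (cmod (u x))\<^sup>2" for x
      using assms by (auto simp: indicator_def)
  qed
  finally show ?thesis .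
qed

section \<open>The ramp and the transfer map\<close>

definition ramp_density :: "real \<Rightarrow> real \<Rightarrow> real \<Rightarrow> real" where
  "ramp_density \<alpha> \<beta> y = indicator {\<alpha><..<\<beta>} y / (\<beta> - \<alpha>)"

text \<open>\<open>ramp \<alpha> \<beta>\<close> is 0 on \<open>[0, \<alpha>]\<close>, linear on \<open>[\<alpha>, \<beta>]\<close> and 1 on \<open>[\<beta>, 1]\<close>; like the elements of
  \<open>H1_theta\<close> it vanishes outside \<open>[0, 1]\<close>.\<close>

definition ramp :: "real \<Rightarrow> real \<Rightarrow> real \<Rightarrow> complex" where
  "ramp \<alpha> \<beta> x =
     (if x \<in> {0..1} then of_real (set_lebesgue_integral lebesgue {0..x} (ramp_density \<alpha> \<beta>)) else 0)"

lemma ramp_density_bounds: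
  assumes "\<alpha> < \<beta>"
  shows "0 \<le> ramp_density \<alpha> \<beta> y" "ramp_density \<alpha> \<beta> y \<le> 1 / (\<beta> - \<alpha>)"
  using assms by (auto simp: ramp_density_def indicator_def)

lemma ramp_density_Q1: "y \<in> Q1 \<alpha> \<beta> \<Longrightarrow> ramp_density \<alpha> \<beta> y = 0"
  unfolding ramp_density_def Q1_def by (auto simp: indicator_def)

lemma borel_measurable_ramp_density: "ramp_density \<alpha> \<beta> \<in> borel_measurable lebesgue"
  unfolding ramp_density_def
  by (intro borel_measurable_divide borel_measurable_indicator borel_measurable_const) simp

lemma ramp_0: "ramp \<alpha> \<beta> 0 = 0"
proof -
  have "AE y in lebesgue. y \<notin> {0::real}" by (rule AE_not_in) simp
  then have "AE y in lebesgue. indicat_real {0..0} y *\<^sub>R ramp_density \<alpha> \<beta> y = 0"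
    by eventually_elim simp
  then show ?thesis by (simp add: ramp_def set_lebesgue_integral_def integral_eq_zero_AE)
qed

lemma ramp_1:
  assumes "0 \<le> \<alpha>" "\<alpha> < \<beta>" "\<beta> \<le> 1"
  shows "ramp \<alpha> \<beta> 1 = 1"
proof -
  have "set_lebesgue_integral lebesgue {0..1} (ramp_density \<alpha> \<beta>)
      = set_lebesgue_integral lebesgue {\<alpha><..<\<beta>} (\<lambda>_. 1 / (\<beta> - \<alpha>))"
    unfolding set_lebesgue_integral_def
    by (rule Bochner_Integration.integral_cong) (use assms in \<open>auto simp: ramp_density_def indicator_def\<close>)
  also have "\<dots> = measure lebesgue {\<alpha><..<\<beta>} *\<^sub>R (1 / (\<beta> - \<alpha>))"
    by (rule set_integral_const) (use assms in simp_all)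
  also have "\<dots> = 1" using assms by simp
  finally show ?thesis unfolding ramp_def by simp
qed

lemma norm_ramp_le:
  assumes "0 \<le> \<alpha>" "\<alpha> < \<beta>" "\<beta> \<le> 1"
  shows "cmod (ramp \<alpha> \<beta> x) \<le> 1"
proof (cases "x \<in> {0..1}")
  case True
  have int: "set_integrable lebesgue {0..1} (ramp_density \<alpha> \<beta>)"
    using ramp_density_bounds[OF assms(2)]
    by (intro set_integrable_bounded[OF borel_measurable_ramp_density]) auto
  have nonneg: "0 \<le> set_lebesgue_integral lebesgue A (ramp_density \<alpha> \<beta>)" for A
    unfolding set_lebesgue_integral_def using ramp_density_bounds[OF assms(2)]
    by (intro Bochner_Integration.integral_nonneg) (simp add: indicator_def)
  have "set_lebesgue_integral lebesgue {0..x} (ramp_density \<alpha> \<beta>)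
      \<le> set_lebesgue_integral lebesgue {0..1} (ramp_density \<alpha> \<beta>)"
    using set_integral_split_at[OF int, of x] True nonneg[of "{x<..1}"] by simp
  also have "\<dots> = 1" using ramp_1[OF assms] by (simp add: ramp_def)
  finally show ?thesis using True nonneg unfolding ramp_def by simp
qed (auto simp: ramp_def)

lemma is_H1_deriv_ramp:
  assumes "\<alpha> < \<beta>"
  shows "is_H1_deriv (ramp \<alpha> \<beta>) (\<lambda>y. of_real (ramp_density \<alpha> \<beta> y))"
  unfolding is_H1_deriv_def
proof (intro conjI ballI)
  note [measurable] = borel_measurable_ramp_density
  show "(\<lambda>y. complex_of_real (ramp_density \<alpha> \<beta> y)) \<in> borel_measurable lebesgue" by measurable
  note bounds = ramp_density_bounds[OF assms]
  show "set_integrable lebesgue {0..1} (\<lambda>y. complex_of_real (ramp_density \<alpha> \<beta> y))"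
    by (rule set_integrable_bounded[where B = "1 / (\<beta> - \<alpha>)"]) (measurable, use bounds in simp)
  show "set_integrable lebesgue {0..1} (\<lambda>y. (cmod (complex_of_real (ramp_density \<alpha> \<beta> y)))\<^sup>2)"
    by (rule set_integrable_bounded[where B = "(1 / (\<beta> - \<alpha>))\<^sup>2"])
      (measurable, use bounds in \<open>simp add: power_mono\<close>)
  fix x :: real assume "x \<in> {0..1}"
  then show "ramp \<alpha> \<beta> x = ramp \<alpha> \<beta> 0
      + set_lebesgue_integral lebesgue {0..x} (\<lambda>y. complex_of_real (ramp_density \<alpha> \<beta> y))"
    unfolding ramp_0 by (simp add: ramp_def set_integral_complex_of_real)
qed

definition transfer :: "real \<Rightarrow> real \<Rightarrow> complex \<Rightarrow> (real \<Rightarrow> complex) \<Rightarrow> real \<Rightarrow> complex" where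
  "transfer \<alpha> \<beta> w u x = u x + w * u 1 * ramp \<alpha> \<beta> x"

lemma transfer_at_1: "0 \<le> \<alpha> \<Longrightarrow> \<alpha> < \<beta> \<Longrightarrow> \<beta> \<le> 1 \<Longrightarrow> transfer \<alpha> \<beta> w u 1 = (1 + w) * u 1"
  by (simp add: transfer_def ramp_1 algebra_simps)

lemma is_H1_deriv_transfer:
  assumes "is_H1_deriv u g" "\<alpha> < \<beta>"
  shows "is_H1_deriv (transfer \<alpha> \<beta> w u) (\<lambda>x. g x + w * u 1 * of_real (ramp_density \<alpha> \<beta> x))"
  using is_H1_deriv_lincomb[OF assms(1) is_H1_deriv_ramp[OF assms(2)], of 1 "w * u 1"]
  by (simp add: transfer_def[abs_def])

lemma transfer_in_Vspace:
  assumes u: "u \<in> Vspace p \<alpha> \<beta> \<theta>" and p: "\<forall>x. p x > 0"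
    and ab: "0 \<le> \<alpha>" "\<alpha> < \<beta>" "\<beta> \<le> 1"
  shows "transfer \<alpha> \<beta> (cis (2 * pi * \<delta>) - 1) u \<in> Vspace p \<alpha> \<beta> (\<theta> + \<delta>)"
proof -
  obtain g where g: "is_H1_deriv u g" "AE x in lebesgue. x \<in> Q1 \<alpha> \<beta> \<longrightarrow> g x = 0"
    and outside: "\<And>x. x \<notin> {0..1} \<Longrightarrow> u x = 0" and bc: "u 1 = cis (2 * pi * \<theta>) * u 0"
    using VspaceE[OF u p] by blast
  let ?v = "transfer \<alpha> \<beta> (cis (2 * pi * \<delta>) - 1) u"
  have "AE x in lebesgue. x \<in> Q1 \<alpha> \<beta> \<longrightarrow>
      g x + (cis (2 * pi * \<delta>) - 1) * u 1 * of_real (ramp_density \<alpha> \<beta> x) = 0"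
    using g(2) by eventually_elim (simp add: ramp_density_Q1)
  moreover have "?v x = 0" if "x \<notin> {0..1}" for x
    using that outside unfolding transfer_def ramp_def by auto
  moreover have "?v 1 = cis (2 * pi * (\<theta> + \<delta>)) * ?v 0"
    unfolding transfer_at_1[OF ab] using bc
    by (simp add: transfer_def ramp_0 distrib_left cis_mult[symmetric] mult_ac)
  ultimately show ?thesis
    using is_H1_deriv_transfer[OF g(1) ab(2)] unfolding Vspace_iff[OF p] by blast
qed

lemma transfer_lincomb:
  "transfer \<alpha> \<beta> w (lincomb k us c) = lincomb k (\<lambda>j. transfer \<alpha> \<beta> w (us j)) c"
  unfolding transfer_def lincomb_def
  by (simp add: sum.distrib sum_distrib_left sum_distrib_right algebra_simps)

lemma norm_transfer_deriv_sq_le: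
  assumes "x \<in> {\<alpha><..<\<beta>}"
  shows "(cmod (g + w * u1 * of_real (ramp_density \<alpha> \<beta> x)))\<^sup>2
    \<le> (1 + cmod w) * (cmod g)\<^sup>2 + (1 + 1 / cmod w) * (cmod (w * u1))\<^sup>2 / (\<beta> - \<alpha>)\<^sup>2"
proof -
  have "cmod (of_real (ramp_density \<alpha> \<beta> x)) = 1 / (\<beta> - \<alpha>)"
    unfolding norm_of_real using assms by (simp add: ramp_density_def)
  then have "(1 + 1 / cmod w) * (cmod (w * u1 * of_real (ramp_density \<alpha> \<beta> x)))\<^sup>2
      = (1 + 1 / cmod w) * (cmod (w * u1))\<^sup>2 / (\<beta> - \<alpha>)\<^sup>2"
    by (simp add: norm_mult power_mult_distrib power_divide)
  then show ?thesis
    using norm_add_sq_le[where \<eta> = "cmod w" and a = g and b = "w * u1 * of_real (ramp_density \<alpha> \<beta> x)"]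
    by simp
qed

lemma transfer_eq_0_imp:
  assumes "\<forall>x. transfer \<alpha> \<beta> w u x = 0" "1 + w \<noteq> 0" "0 \<le> \<alpha>" "\<alpha> < \<beta>" "\<beta> \<le> 1"
  shows "u x = 0"
proof -
  have "u 1 = 0" using assms transfer_at_1[of \<alpha> \<beta> w u] by simp
  then show ?thesis using assms(1) by (simp add: transfer_def)
qed

section \<open>Finite-dimensional trial spaces\<close>

lemma convergent_subseq_coordinates:
  fixes f :: "nat \<Rightarrow> nat \<Rightarrow> 'a::{heine_borel, real_normed_vector}"
  assumes "\<And>n j. j < k \<Longrightarrow> norm (f n j) \<le> B"
  shows "\<exists>r L. strict_mono r \<and> (\<forall>j<k. (\<lambda>n. f (r n) j) \<longlonglongrightarrow> L j)"
  using assms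
proof (induction k)
  case 0
  then show ?case by (intro exI[of _ id]) (auto simp: strict_mono_def)
next
  case (Suc k)
  then obtain r L where r: "strict_mono r" and L: "\<forall>j<k. (\<lambda>n. f (r n) j) \<longlonglongrightarrow> L j"
    by (metis less_SucI)
  have "\<forall>n. f (r n) k \<in> cball 0 B" using Suc.prems by auto
  then obtain l r' where r': "strict_mono r'" and l: "((\<lambda>n. f (r n) k) \<circ> r') \<longlonglongrightarrow> l"
    using seq_compactE[OF compact_imp_seq_compact[OF compact_cball]] by metis
  have "(\<lambda>n. f ((r \<circ> r') n) j) \<longlonglongrightarrow> (L(k := l)) j" if "j < Suc k" for j
  proof (cases "j = k")
    case False
    then have "(\<lambda>n. f (r n) j) \<longlonglongrightarrow> L j" using L that by simp
    from LIMSEQ_subseq_LIMSEQ[OF this r'] show ?thesis using False by (simp add: o_def)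
  qed (use l in \<open>simp add: o_def\<close>)
  then show ?case using strict_mono_o[OF r r'] by blast
qed

definition coeff_norm_sq :: "nat \<Rightarrow> (nat \<Rightarrow> complex) \<Rightarrow> real" where
  "coeff_norm_sq k c = (\<Sum>j<k. (cmod (c j))\<^sup>2)"

lemma coeff_norm_sq_ge: "j < k \<Longrightarrow> (cmod (c j))\<^sup>2 \<le> coeff_norm_sq k c"
  unfolding coeff_norm_sq_def by (rule member_le_sum) auto

lemma coeff_norm_sq_pos:
  assumes "j < k" "c j \<noteq> 0"
  shows "coeff_norm_sq k c > 0"
proof -
  have "0 < (cmod (c j))\<^sup>2" using assms(2) by simp
  then show ?thesis using coeff_norm_sq_ge[OF assms(1), of c] by linarith
qed

lemma coeff_norm_sq_scale: "coeff_norm_sq k (\<lambda>j. a * c j) = (cmod a)\<^sup>2 * coeff_norm_sq k c"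
  unfolding coeff_norm_sq_def by (simp add: norm_mult power_mult_distrib sum_distrib_left)

lemma lincomb_scale: "lincomb k us (\<lambda>j. a * c j) = (\<lambda>x. a * lincomb k us c x)"
  unfolding lincomb_def by (simp add: sum_distrib_left mult.assoc)

lemma lincomb_add: "lincomb k us (\<lambda>j. c j + d j) = (\<lambda>x. lincomb k us c x + lincomb k us d x)"
  unfolding lincomb_def by (simp add: sum.distrib distrib_right)

definition linearly_independent_on :: "nat \<Rightarrow> (nat \<Rightarrow> real \<Rightarrow> complex) \<Rightarrow> bool" where
  "linearly_independent_on k us \<longleftrightarrow> (\<forall>c. (\<forall>x. lincomb k us c x = 0) \<longrightarrow> (\<forall>j<k. c j = 0))"

context
  fixes p :: "real \<Rightarrow> real" and \<alpha> \<beta> \<theta> :: real and k :: nat and us :: "nat \<Rightarrow> real \<Rightarrow> complex"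
  assumes p_pos: "\<forall>x. p x > 0" and us: "\<forall>j<k. us j \<in> Vspace p \<alpha> \<beta> \<theta>"
begin

lemma ex_H1_deriv_lincomb: "\<exists>g. is_H1_deriv (lincomb k us c) g"
  using Vspace_lincomb[OF us p_pos] Vspace_iff[OF p_pos] by blast

lemma L2_norm_sq_lincomb_le:
  "L2_norm_sq (lincomb k us c) \<le> k * (\<Sum>j<k. (cmod (c j))\<^sup>2 * L2_norm_sq (us j))"
proof -
  obtain g where g: "is_H1_deriv (lincomb k us c) g" using ex_H1_deriv_lincomb by blast
  have "set_integrable lebesgue {0<..<1} (\<lambda>x. (cmod (us j x))\<^sup>2)" if "j < k" for j
    using that us p_pos by (auto elim!: VspaceE intro: set_integrable_sq_H1)
  then have ij: "set_integrable lebesgue {0<..<1} (\<lambda>x. k * ((cmod (c j))\<^sup>2 * (cmod (us j x))\<^sup>2))"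
    if "j \<in> {..<k}" for j
    using that by (intro set_integrable_mult_right) auto
  have "L2_norm_sq (lincomb k us c)
      \<le> set_lebesgue_integral lebesgue {0<..<1} (\<lambda>x. \<Sum>j<k. k * ((cmod (c j))\<^sup>2 * (cmod (us j x))\<^sup>2))"
    unfolding L2_norm_sq_def
  proof (rule set_integral_mono[OF set_integrable_sq_H1[OF g] set_integrable_sum[OF _ ij]])
    fix x :: real
    have "(cmod (lincomb k us c x))\<^sup>2 \<le> k * (\<Sum>j<k. (cmod (c j * us j x))\<^sup>2)"
      unfolding lincomb_def using norm_sum_sq_le[of "{..<k}"] by simp
    then show "(cmod (lincomb k us c x))\<^sup>2 \<le> (\<Sum>j<k. k * ((cmod (c j))\<^sup>2 * (cmod (us j x))\<^sup>2))"
      by (simp add: sum_distrib_left norm_mult power_mult_distrib)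
  qed simp
  also have "\<dots> = (\<Sum>j<k. set_lebesgue_integral lebesgue {0<..<1}
      (\<lambda>x. k * ((cmod (c j))\<^sup>2 * (cmod (us j x))\<^sup>2)))"
    by (rule set_integral_sum[OF _ ij]) simp
  also have "\<dots> = k * (\<Sum>j<k. (cmod (c j))\<^sup>2 * L2_norm_sq (us j))"
    by (simp add: L2_norm_sq_def sum_distrib_left)
  finally show ?thesis .
qed

lemma L2_norm_sq_lincomb_perturb:
  "L2_norm_sq (lincomb k us c)
    \<le> 2 * L2_norm_sq (lincomb k us d) + 2 * (k * (\<Sum>j<k. (cmod (c j - d j))\<^sup>2 * L2_norm_sq (us j)))"
proof -
  obtain g where g: "is_H1_deriv (lincomb k us d) g" using ex_H1_deriv_lincomb by blast
  obtain h where h: "is_H1_deriv (lincomb k us (\<lambda>j. c j - d j)) h" using ex_H1_deriv_lincomb by blast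
  have "lincomb k us c = (\<lambda>x. lincomb k us d x + lincomb k us (\<lambda>j. c j - d j) x)"
    using lincomb_add[of k us d "\<lambda>j. c j - d j"] by simp
  then have "L2_norm_sq (lincomb k us c)
      \<le> 2 * L2_norm_sq (lincomb k us d) + 2 * L2_norm_sq (lincomb k us (\<lambda>j. c j - d j))"
    using L2_norm_sq_add_le[OF g h] by simp
  then show ?thesis using L2_norm_sq_lincomb_le[of "\<lambda>j. c j - d j"] by simp
qed

lemma L2_norm_sq_lincomb_pos:
  assumes "linearly_independent_on k us" "j < k" "c j \<noteq> 0"
  shows "L2_norm_sq (lincomb k us c) > 0"
proof -
  obtain g where g: "is_H1_deriv (lincomb k us c) g" using ex_H1_deriv_lincomb by blast
  obtain x where x: "lincomb k us c x \<noteq> 0"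
    using assms unfolding linearly_independent_on_def by blast
  then have "x \<in> {0..1}"
    using Vspace_vanishes_outside[OF Vspace_lincomb[OF us p_pos] p_pos] by blast
  then show ?thesis by (rule L2_norm_sq_pos[OF g _ x])
qed

lemma L2_norm_sq_lincomb_limit:
  assumes L: "\<forall>j<k. (\<lambda>n. d n j) \<longlonglongrightarrow> L j"
    and small: "(\<lambda>n. L2_norm_sq (lincomb k us (d n))) \<longlonglongrightarrow> 0"
  shows "L2_norm_sq (lincomb k us L) = 0"
proof -
  define b where "b n = 2 * L2_norm_sq (lincomb k us (d n))
    + 2 * (k * (\<Sum>j<k. (cmod (L j - d n j))\<^sup>2 * L2_norm_sq (us j)))" for n
  have "b \<longlonglongrightarrow> 2 * 0 + 2 * (k * (\<Sum>j<k. (cmod (L j - L j))\<^sup>2 * L2_norm_sq (us j)))"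
    unfolding b_def using L by (intro tendsto_intros small) auto
  moreover have "L2_norm_sq (lincomb k us L) \<le> b n" for n
    unfolding b_def by (rule L2_norm_sq_lincomb_perturb)
  ultimately have "L2_norm_sq (lincomb k us L) \<le> 0"
    by (intro LIMSEQ_le_const) auto
  then show ?thesis using L2_norm_sq_nonneg by (intro antisym) auto
qed

lemma L2_norm_sq_lincomb_ge:
  assumes indep: "linearly_independent_on k us"
  shows "\<exists>m>0. \<forall>c. m * coeff_norm_sq k c \<le> L2_norm_sq (lincomb k us c)"
proof (rule ccontr)
  assume "\<not> ?thesis"
  then have "\<forall>n. \<exists>c. L2_norm_sq (lincomb k us c) < coeff_norm_sq k c / Suc n"
    by (metis divide_inverse inverse_positive_iff_positive mult.commute not_le of_nat_0_less_iff zero_less_Suc)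
  then obtain c where c: "\<And>n. L2_norm_sq (lincomb k us (c n)) < coeff_norm_sq k (c n) / Suc n"
    by metis
  have S: "coeff_norm_sq k (c n) > 0" for n
  proof -
    have "0 < coeff_norm_sq k (c n) / Suc n"
      using c[of n] L2_norm_sq_nonneg[of "lincomb k us (c n)"] by linarith
    then show ?thesis by (simp add: zero_less_divide_iff)
  qed
  define d where "d n j = inverse (of_real (sqrt (coeff_norm_sq k (c n)))) * c n j" for n j
  have a: "(cmod (inverse (of_real (sqrt (coeff_norm_sq k (c n))) :: complex)))\<^sup>2 = 1 / coeff_norm_sq k (c n)" for n
    using S[of n] by (simp add: norm_inverse power_inverse divide_inverse)
  have d_unit: "coeff_norm_sq k (d n) = 1" for n
    unfolding d_def coeff_norm_sq_scale a using S[of n] by simp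
  have d_small: "L2_norm_sq (lincomb k us (d n)) < inverse (Suc n)" for n
    unfolding d_def lincomb_scale L2_norm_sq_scale a
    using c[of n] S[of n] by (simp add: divide_less_eq field_simps)
  have "cmod (d n j) \<le> 1" if "j < k" for n j
    using coeff_norm_sq_ge[OF that, of "d n"] d_unit[of n] by (simp add: power_le_one_iff abs_square_le_1)
  then obtain r L where r: "strict_mono r" and L: "\<forall>j<k. (\<lambda>n. d (r n) j) \<longlonglongrightarrow> L j"
    using convergent_subseq_coordinates[of k d 1] by blast
  have "(\<lambda>n. coeff_norm_sq k (d (r n))) \<longlonglongrightarrow> coeff_norm_sq k L"
    unfolding coeff_norm_sq_def by (intro tendsto_intros) (use L in auto)
  then have "coeff_norm_sq k L = 1" using d_unit by (simp add: LIMSEQ_const_iff)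
  then have "\<exists>j<k. L j \<noteq> 0"
  proof (rule contrapos_pp)
    assume "\<not> (\<exists>j<k. L j \<noteq> 0)"
    then show "coeff_norm_sq k L \<noteq> 1" by (simp add: coeff_norm_sq_def)
  qed
  then obtain j where "j < k" "L j \<noteq> 0" by blast
  then have pos: "L2_norm_sq (lincomb k us L) > 0" by (rule L2_norm_sq_lincomb_pos[OF indep])
  have "(\<lambda>n. L2_norm_sq (lincomb k us (d (r n)))) \<longlonglongrightarrow> 0"
  proof (rule tendsto_sandwich[of "\<lambda>_. 0" _ _ "\<lambda>n. inverse (real (Suc (r n)))"])
    show "\<forall>\<^sub>F n in sequentially. 0 \<le> L2_norm_sq (lincomb k us (d (r n)))"
      by (simp add: L2_norm_sq_nonneg)
    show "\<forall>\<^sub>F n in sequentially. L2_norm_sq (lincomb k us (d (r n))) \<le> inverse (real (Suc (r n)))"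
      using d_small by (simp add: less_imp_le)
    show "(\<lambda>n. inverse (real (Suc (r n)))) \<longlonglongrightarrow> 0"
      using LIMSEQ_subseq_LIMSEQ[OF LIMSEQ_inverse_real_of_nat r] by (simp add: o_def)
  qed simp
  then show False using L2_norm_sq_lincomb_limit[OF L] pos by simp
qed

end

definition trial_family :: "(real \<Rightarrow> real) \<Rightarrow> real \<Rightarrow> real \<Rightarrow> real \<Rightarrow> nat \<Rightarrow> (nat \<Rightarrow> real \<Rightarrow> complex) \<Rightarrow> bool" where
  "trial_family p \<alpha> \<beta> \<theta> k us \<longleftrightarrow> (\<forall>j<k. us j \<in> Vspace p \<alpha> \<beta> \<theta>) \<and> linearly_independent_on k us"

definition rayleigh_range :: "(real \<Rightarrow> real) \<Rightarrow> real \<Rightarrow> real \<Rightarrow> nat \<Rightarrow> (nat \<Rightarrow> real \<Rightarrow> complex) \<Rightarrow> real set" where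
  "rayleigh_range p \<alpha> \<beta> k us = {rayleigh p \<alpha> \<beta> (lincomb k us c) | c. \<exists>j<k. c j \<noteq> 0}"

lemma eigenvalue_eq:
  "eigenvalue p \<alpha> \<beta> \<theta> k = Inf {Sup (rayleigh_range p \<alpha> \<beta> k us) | us. trial_family p \<alpha> \<beta> \<theta> k us}"
  unfolding eigenvalue_def rayleigh_range_def trial_family_def linearly_independent_on_def lincomb_def
  by simp

section \<open>The transfer estimate\<close>

locale cell_problem =
  fixes p :: "real \<Rightarrow> real" and \<alpha> \<beta> M :: real
  assumes ab: "0 < \<alpha>" "\<alpha> < \<beta>" "\<beta> < 1"
    and p_meas: "p \<in> borel_measurable lebesgue" and p_pos: "\<forall>x. p x > 0"
    and p_le: "AE x in lebesgue. x \<in> {0<..<1} \<longrightarrow> p x \<le> M"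

definition shift_den :: "real \<Rightarrow> real \<Rightarrow> real" where
  "shift_den \<beta> \<eta> = 1 - (\<eta>\<^sup>2 + \<eta>) / (1 - \<beta>)"

definition shift_gain :: "real \<Rightarrow> real \<Rightarrow> real" where
  "shift_gain \<beta> \<eta> = (1 + \<eta>)\<^sup>2 / shift_den \<beta> \<eta>"

definition shift_offset :: "real \<Rightarrow> real \<Rightarrow> real \<Rightarrow> real \<Rightarrow> real" where
  "shift_offset \<alpha> \<beta> M \<eta> = (1 + \<eta>) * (\<eta>\<^sup>2 + \<eta>) * M / ((1 - \<beta>) * (\<beta> - \<alpha>) * shift_den \<beta> \<eta>)"

lemma tendsto_shift_den: "(f \<longlongrightarrow> 0) F \<Longrightarrow> \<beta> < 1 \<Longrightarrow> ((\<lambda>x. shift_den \<beta> (f x)) \<longlongrightarrow> 1) F"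
  unfolding shift_den_def by (auto intro!: tendsto_eq_intros)

lemma tendsto_shift_gain: "(f \<longlongrightarrow> 0) F \<Longrightarrow> \<beta> < 1 \<Longrightarrow> ((\<lambda>x. shift_gain \<beta> (f x)) \<longlongrightarrow> 1) F"
  unfolding shift_gain_def by (auto intro!: tendsto_eq_intros tendsto_shift_den)

lemma tendsto_shift_offset:
  "(f \<longlongrightarrow> 0) F \<Longrightarrow> \<alpha> < \<beta> \<Longrightarrow> \<beta> < 1 \<Longrightarrow> ((\<lambda>x. shift_offset \<alpha> \<beta> M (f x)) \<longlongrightarrow> 0) F"
  unfolding shift_offset_def by (auto intro!: tendsto_eq_intros tendsto_shift_den)

context cell_problem
begin

lemma weight_bound_nonneg: "M \<ge> 0"
proof -
  have "0 \<le> set_lebesgue_integral lebesgue {\<alpha><..<\<beta>} p"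
    unfolding set_lebesgue_integral_def using p_pos
    by (intro Bochner_Integration.integral_nonneg) (simp add: less_imp_le)
  also have "\<dots> \<le> M * (\<beta> - \<alpha>)"
    using set_integral_weight_le(2)[OF p_meas p_le p_pos] ab by simp
  finally show ?thesis using ab by (simp add: zero_le_mult_iff)
qed

lemma transfer_defect_le:
  assumes u: "u \<in> Vspace p \<alpha> \<beta> \<theta>"
  shows "(1 + 1 / cmod w) * (cmod (w * u 1))\<^sup>2 \<le> ((cmod w)\<^sup>2 + cmod w) / (1 - \<beta>) * L2_norm_sq u"
proof (cases "w = 0")
  case True then show ?thesis using ab L2_norm_sq_nonneg[of u] by simp
next
  case False
  have "(1 + 1 / cmod w) * (cmod (w * u 1))\<^sup>2 = ((cmod w)\<^sup>2 + cmod w) * (cmod (u 1))\<^sup>2"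
    using False by (simp add: norm_mult power2_eq_square field_simps)
  also have "\<dots> \<le> ((cmod w)\<^sup>2 + cmod w) * (L2_norm_sq u / (1 - \<beta>))"
    using Vspace_boundary_value_le[OF u p_pos] ab
    by (intro mult_left_mono) (simp_all add: field_simps)
  finally show ?thesis by simp
qed

lemma L2_norm_sq_transfer_ge:
  assumes u: "u \<in> Vspace p \<alpha> \<beta> \<theta>"
  shows "shift_den \<beta> (cmod w) * L2_norm_sq u \<le> (1 + cmod w) * L2_norm_sq (transfer \<alpha> \<beta> w u)"
proof -
  define \<eta> where "\<eta> = cmod w"
  define q where "q = (\<eta>\<^sup>2 + \<eta>) / (1 - \<beta>) * L2_norm_sq u"
  obtain g where g: "is_H1_deriv u g" using VspaceE[OF u p_pos] by blast
  note iu = set_integrable_sq_H1[OF g]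
  note iT = set_integrable_sq_H1[OF is_H1_deriv_transfer[OF g ab(2)]]
  have iq: "set_integrable lebesgue {0<..<1::real} (\<lambda>_. q)"
    by (rule absolutely_integrable_on_const) simp
  have "(cmod (u x))\<^sup>2 \<le> (1 + \<eta>) * (cmod (transfer \<alpha> \<beta> w u x))\<^sup>2 + q" for x
  proof -
    have "(cmod (u x))\<^sup>2 = (cmod (transfer \<alpha> \<beta> w u x + - (w * u 1 * ramp \<alpha> \<beta> x)))\<^sup>2"
      by (simp add: transfer_def)
    also have "\<dots> \<le> (1 + \<eta>) * (cmod (transfer \<alpha> \<beta> w u x))\<^sup>2
        + (1 + 1 / \<eta>) * (cmod (w * u 1 * ramp \<alpha> \<beta> x))\<^sup>2"
      using norm_add_sq_le[where \<eta> = \<eta> and b = "- (w * u 1 * ramp \<alpha> \<beta> x)"]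
      by (simp add: \<eta>_def)
    also have "(cmod (ramp \<alpha> \<beta> x))\<^sup>2 \<le> 1"
      using norm_ramp_le[of \<alpha> \<beta> x] ab by (simp add: power_le_one)
    then have "(cmod (w * u 1 * ramp \<alpha> \<beta> x))\<^sup>2 \<le> (cmod (w * u 1))\<^sup>2"
      by (simp add: norm_mult power_mult_distrib mult_left_le)
    then have "(1 + 1 / \<eta>) * (cmod (w * u 1 * ramp \<alpha> \<beta> x))\<^sup>2 \<le> (1 + 1 / \<eta>) * (cmod (w * u 1))\<^sup>2"
      by (rule mult_left_mono) (simp add: \<eta>_def)
    also have "\<dots> \<le> q"
      using transfer_defect_le[OF u, of w] unfolding q_def \<eta>_def .
    finally show ?thesis by simp
  qed
  then have "L2_norm_sq u
      \<le> set_lebesgue_integral lebesgue {0<..<1} (\<lambda>x. (1 + \<eta>) * (cmod (transfer \<alpha> \<beta> w u x))\<^sup>2 + q)"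
    unfolding L2_norm_sq_def
    using iT iq by (intro set_integral_mono[OF iu] set_integral_add(1) set_integrable_mult_right)
  also have "\<dots> = (1 + \<eta>) * L2_norm_sq (transfer \<alpha> \<beta> w u) + q"
    unfolding L2_norm_sq_def using iT iq by (simp add: set_integral_const)
  finally show ?thesis unfolding shift_den_def q_def \<eta>_def by (simp add: algebra_simps)
qed

lemma energy_transfer_le:
  assumes u: "u \<in> Vspace p \<alpha> \<beta> \<theta>"
  shows "energy p \<alpha> \<beta> (transfer \<alpha> \<beta> w u)
    \<le> (1 + cmod w) * energy p \<alpha> \<beta> u
       + ((cmod w)\<^sup>2 + cmod w) / (1 - \<beta>) * L2_norm_sq u * (M / (\<beta> - \<alpha>))"
proof -
  define \<eta> where "\<eta> = cmod w"
  define r where "r = (1 + 1 / \<eta>) * (cmod (w * u 1))\<^sup>2 / (\<beta> - \<alpha>)\<^sup>2"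
  obtain g where g: "is_H1_deriv u g" using VspaceE[OF u p_pos] by blast
  define G where "G x = g x + w * u 1 * of_real (ramp_density \<alpha> \<beta> x)" for x
  have G: "is_H1_deriv (transfer \<alpha> \<beta> w u) G"
    unfolding G_def[abs_def] by (rule is_H1_deriv_transfer[OF g ab(2)])
  have ab': "0 \<le> \<alpha>" "\<beta> \<le> 1" using ab by auto
  have ig: "set_integrable lebesgue {\<alpha><..<\<beta>} (\<lambda>x. p x * (cmod (g x))\<^sup>2)"
    and iG: "set_integrable lebesgue {\<alpha><..<\<beta>} (\<lambda>x. p x * (cmod (G x))\<^sup>2)"
    using ab' by (auto intro!: set_integrable_weighted_sq[OF p_meas _ p_le p_pos]
        is_H1_derivD[OF g] is_H1_derivD[OF G])
  note ip = set_integral_weight_le[OF p_meas p_le p_pos ab'(1) less_imp_le[OF ab(2)] ab'(2)]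
  have r0: "r \<ge> 0" unfolding r_def \<eta>_def by simp
  have "energy p \<alpha> \<beta> (transfer \<alpha> \<beta> w u)
      \<le> set_lebesgue_integral lebesgue {\<alpha><..<\<beta>} (\<lambda>x. (1 + \<eta>) * (p x * (cmod (g x))\<^sup>2) + r * p x)"
    unfolding energy_eq_integral[OF G ab' p_meas]
  proof (rule set_integral_mono[OF iG])
    show "set_integrable lebesgue {\<alpha><..<\<beta>} (\<lambda>x. (1 + \<eta>) * (p x * (cmod (g x))\<^sup>2) + r * p x)"
      using ig ip(1) by (intro set_integral_add(1) set_integrable_mult_right)
    fix x assume x: "x \<in> {\<alpha><..<\<beta>}"
    have "(cmod (G x))\<^sup>2 \<le> (1 + \<eta>) * (cmod (g x))\<^sup>2 + r"
      unfolding G_def r_def \<eta>_def using x by (rule norm_transfer_deriv_sq_le)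
    then have "p x * (cmod (G x))\<^sup>2 \<le> p x * ((1 + \<eta>) * (cmod (g x))\<^sup>2 + r)"
      using p_pos by (intro mult_left_mono) (auto simp: less_imp_le)
    then show "p x * (cmod (G x))\<^sup>2 \<le> (1 + \<eta>) * (p x * (cmod (g x))\<^sup>2) + r * p x"
      by (simp add: algebra_simps)
  qed
  also have "\<dots> = (1 + \<eta>) * energy p \<alpha> \<beta> u + r * set_lebesgue_integral lebesgue {\<alpha><..<\<beta>} p"
    using ig ip(1) by (simp add: energy_eq_integral[OF g ab' p_meas])
  also have "r * set_lebesgue_integral lebesgue {\<alpha><..<\<beta>} p \<le> r * (M * (\<beta> - \<alpha>))"
    using ip(2) r0 by (rule mult_left_mono)
  also have "r * (M * (\<beta> - \<alpha>)) = (1 + 1 / \<eta>) * (cmod (w * u 1))\<^sup>2 * (M / (\<beta> - \<alpha>))"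
  proof -
    have "a / d\<^sup>2 * (M * d) = a * (M / d)" if "d \<noteq> 0" for a d :: real
      using that by (simp add: power2_eq_square field_simps)
    then show ?thesis unfolding r_def using ab by simp
  qed
  also have "\<dots> \<le> (\<eta>\<^sup>2 + \<eta>) / (1 - \<beta>) * L2_norm_sq u * (M / (\<beta> - \<alpha>))"
    using transfer_defect_le[OF u, of w] weight_bound_nonneg ab unfolding \<eta>_def
    by (intro mult_right_mono) simp_all
  finally show ?thesis unfolding \<eta>_def by simp
qed

lemma rayleigh_transfer_le:
  assumes u: "u \<in> Vspace p \<alpha> \<beta> \<theta>" and L: "L2_norm_sq u > 0"
    and D: "shift_den \<beta> (cmod w) > 0"
  shows "rayleigh p \<alpha> \<beta> (transfer \<alpha> \<beta> w u)
    \<le> shift_gain \<beta> (cmod w) * rayleigh p \<alpha> \<beta> u + shift_offset \<alpha> \<beta> M (cmod w)"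
proof -
  define \<eta> where "\<eta> = cmod w"
  define c where "c = (\<eta>\<^sup>2 + \<eta>) / (1 - \<beta>) * (M / (\<beta> - \<alpha>))"
  define E where "E = (1 + \<eta>) * energy p \<alpha> \<beta> u + c * L2_norm_sq u"
  have \<eta>: "\<eta> \<ge> 0" unfolding \<eta>_def by simp
  then have pos: "0 < 1 + \<eta>" by simp
  have "shift_den \<beta> \<eta> * L2_norm_sq u / (1 + \<eta>) \<le> L2_norm_sq (transfer \<alpha> \<beta> w u)"
    using L2_norm_sq_transfer_ge[OF u, of w]
    by (subst pos_divide_le_eq[OF pos]) (simp add: \<eta>_def mult.commute)
  moreover have "energy p \<alpha> \<beta> (transfer \<alpha> \<beta> w u) \<le> E"
    using energy_transfer_le[OF u, of w] unfolding E_def c_def \<eta>_def by (simp add: mult_ac)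
  moreover have "0 < shift_den \<beta> \<eta> * L2_norm_sq u / (1 + \<eta>)"
    using D L pos unfolding \<eta>_def by simp
  ultimately have "rayleigh p \<alpha> \<beta> (transfer \<alpha> \<beta> w u) \<le> E / (shift_den \<beta> \<eta> * L2_norm_sq u / (1 + \<eta>))"
    unfolding rayleigh_def using energy_nonneg[OF p_pos] by (intro frac_le) (auto intro: order_trans)
  also have "\<dots> = shift_gain \<beta> \<eta> * rayleigh p \<alpha> \<beta> u + shift_offset \<alpha> \<beta> M \<eta>"
  proof -
    have "shift_offset \<alpha> \<beta> M \<eta> = (1 + \<eta>) * c / shift_den \<beta> \<eta>"
      unfolding shift_offset_def c_def by simp
    then show ?thesis
      using D L pos unfolding E_def \<eta>_def shift_gain_def rayleigh_def
      by (simp add: field_simps power2_eq_square)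
  qed
  finally show ?thesis unfolding \<eta>_def .
qed

end

section \<open>Rayleigh quotients on trial spaces\<close>

context cell_problem
begin

lemma energy_lincomb_le:
  assumes us: "\<forall>j<k. us j \<in> Vspace p \<alpha> \<beta> \<theta>"
  shows "energy p \<alpha> \<beta> (lincomb k us c) \<le> k * coeff_norm_sq k c * (\<Sum>j<k. energy p \<alpha> \<beta> (us j))"
proof -
  obtain gs where gs: "\<forall>j<k. is_H1_deriv (us j) (gs j)"
    using ex_Vspace_derivs[OF us p_pos] by blast
  have G: "is_H1_deriv (lincomb k us c) (\<lambda>x. \<Sum>j<k. c j * gs j x)"
    unfolding lincomb_def using gs by (intro is_H1_deriv_sum) blast
  have ab': "0 \<le> \<alpha>" "\<beta> \<le> 1" using ab by auto
  have weighted: "set_integrable lebesgue {\<alpha><..<\<beta>} (\<lambda>x. p x * (cmod (g x))\<^sup>2)" if "is_H1_deriv u g" for u g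
    using set_integrable_weighted_sq[OF p_meas is_H1_derivD(1)[OF that] p_le p_pos is_H1_derivD(3)[OF that] ab'] .
  let ?K = "k * coeff_norm_sq k c"
  have ij: "set_integrable lebesgue {\<alpha><..<\<beta>} (\<lambda>x. ?K * (p x * (cmod (gs j x))\<^sup>2))" if "j \<in> {..<k}" for j
    using that gs weighted[of "us j" "gs j"] by (intro set_integrable_mult_right) simp
  have "energy p \<alpha> \<beta> (lincomb k us c)
      \<le> set_lebesgue_integral lebesgue {\<alpha><..<\<beta>} (\<lambda>x. \<Sum>j<k. ?K * (p x * (cmod (gs j x))\<^sup>2))"
    unfolding energy_eq_integral[OF G ab' p_meas]
  proof (rule set_integral_mono[OF weighted[OF G] set_integrable_sum[OF _ ij]])
    fix x
    have "(cmod (\<Sum>j<k. c j * gs j x))\<^sup>2 \<le> k * (\<Sum>j<k. (cmod (c j * gs j x))\<^sup>2)"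
      using norm_sum_sq_le[of "{..<k}"] by simp
    also have "\<dots> \<le> k * (\<Sum>j<k. coeff_norm_sq k c * (cmod (gs j x))\<^sup>2)"
      using coeff_norm_sq_ge[of _ k c]
      by (intro mult_left_mono sum_mono) (auto simp: norm_mult power_mult_distrib mult_right_mono)
    finally have "p x * (cmod (\<Sum>j<k. c j * gs j x))\<^sup>2
        \<le> p x * (k * (\<Sum>j<k. coeff_norm_sq k c * (cmod (gs j x))\<^sup>2))"
      using p_pos by (intro mult_left_mono) (auto simp: less_imp_le)
    then show "p x * (cmod (\<Sum>j<k. c j * gs j x))\<^sup>2 \<le> (\<Sum>j<k. ?K * (p x * (cmod (gs j x))\<^sup>2))"
      by (simp add: sum_distrib_left algebra_simps)
  qed simp
  also have "\<dots> = (\<Sum>j<k. set_lebesgue_integral lebesgue {\<alpha><..<\<beta>} (\<lambda>x. ?K * (p x * (cmod (gs j x))\<^sup>2)))"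
    by (rule set_integral_sum[OF _ ij]) simp
  also have "\<dots> = (\<Sum>j<k. ?K * energy p \<alpha> \<beta> (us j))"
  proof (intro sum.cong refl)
    fix j assume "j \<in> {..<k}"
    then have "energy p \<alpha> \<beta> (us j) = set_lebesgue_integral lebesgue {\<alpha><..<\<beta>} (\<lambda>x. p x * (cmod (gs j x))\<^sup>2)"
      using gs energy_eq_integral[OF _ ab' p_meas] by blast
    then show "set_lebesgue_integral lebesgue {\<alpha><..<\<beta>} (\<lambda>x. ?K * (p x * (cmod (gs j x))\<^sup>2))
        = ?K * energy p \<alpha> \<beta> (us j)"
      by simp
  qed
  also have "\<dots> = ?K * (\<Sum>j<k. energy p \<alpha> \<beta> (us j))"
    by (simp add: sum_distrib_left)
  finally show ?thesis .
qed

lemma rayleigh_range_bounded: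
  assumes us: "trial_family p \<alpha> \<beta> \<theta> k us" and k: "k \<ge> 1"
  shows "bdd_above (rayleigh_range p \<alpha> \<beta> k us)" "rayleigh_range p \<alpha> \<beta> k us \<noteq> {}"
proof -
  have V: "\<forall>j<k. us j \<in> Vspace p \<alpha> \<beta> \<theta>" and indep: "linearly_independent_on k us"
    using us unfolding trial_family_def by auto
  obtain m where m: "m > 0" "\<forall>c. m * coeff_norm_sq k c \<le> L2_norm_sq (lincomb k us c)"
    using L2_norm_sq_lincomb_ge[OF p_pos V indep] by blast
  define E where "E = k * (\<Sum>j<k. energy p \<alpha> \<beta> (us j))"
  have "r \<le> E / m" if r: "r \<in> rayleigh_range p \<alpha> \<beta> k us" for r
  proof -
    obtain c j where r: "r = rayleigh p \<alpha> \<beta> (lincomb k us c)" and j: "j < k" "c j \<noteq> 0"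
      using r unfolding rayleigh_range_def by blast
    have S: "coeff_norm_sq k c > 0" using coeff_norm_sq_pos[where c = c, OF j] .
    have "0 \<le> E" unfolding E_def using energy_nonneg[OF p_pos] by (simp add: sum_nonneg)
    moreover have "energy p \<alpha> \<beta> (lincomb k us c) \<le> E * coeff_norm_sq k c"
      using energy_lincomb_le[OF V, of c] by (simp add: E_def mult_ac)
    ultimately have "r \<le> E * coeff_norm_sq k c / (m * coeff_norm_sq k c)"
      unfolding r rayleigh_def using m S by (intro frac_le) simp_all
    then show ?thesis using S by simp
  qed
  then show "bdd_above (rayleigh_range p \<alpha> \<beta> k us)" by (rule bdd_aboveI)
  have "rayleigh p \<alpha> \<beta> (lincomb k us (\<lambda>_. 1)) \<in> rayleigh_range p \<alpha> \<beta> k us"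
    unfolding rayleigh_range_def using k by (intro CollectI exI[of _ "\<lambda>_. 1"]) (auto intro: exI[of _ 0])
  then show "rayleigh_range p \<alpha> \<beta> k us \<noteq> {}" by blast
qed

lemma Sup_rayleigh_range_nonneg:
  assumes "trial_family p \<alpha> \<beta> \<theta> k us" "k \<ge> 1"
  shows "0 \<le> Sup (rayleigh_range p \<alpha> \<beta> k us)"
proof -
  obtain r where "r \<in> rayleigh_range p \<alpha> \<beta> k us"
    using rayleigh_range_bounded(2)[OF assms] by blast
  moreover from this have "0 \<le> r"
    unfolding rayleigh_range_def using rayleigh_nonneg[OF p_pos] by blast
  ultimately show ?thesis
    using cSup_upper[OF _ rayleigh_range_bounded(1)[OF assms]] by fastforce
qed

lemma trial_family_transfer:
  assumes "trial_family p \<alpha> \<beta> \<theta> k us"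
  shows "trial_family p \<alpha> \<beta> (\<theta> + \<delta>) k (\<lambda>j. transfer \<alpha> \<beta> (cis (2 * pi * \<delta>) - 1) (us j))"
  unfolding trial_family_def linearly_independent_on_def
proof (intro conjI allI impI)
  have ab': "0 \<le> \<alpha>" "\<beta> \<le> 1" using ab by auto
  show "transfer \<alpha> \<beta> (cis (2 * pi * \<delta>) - 1) (us j) \<in> Vspace p \<alpha> \<beta> (\<theta> + \<delta>)" if "j < k" for j
    using assms that transfer_in_Vspace[OF _ p_pos ab'(1) ab(2) ab'(2)]
    unfolding trial_family_def by blast
  fix c :: "nat \<Rightarrow> complex" and j
  assume "\<forall>x. lincomb k (\<lambda>j. transfer \<alpha> \<beta> (cis (2 * pi * \<delta>) - 1) (us j)) c x = 0" "j < k"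
  then have "\<forall>x. lincomb k us c x = 0"
    using transfer_eq_0_imp[of \<alpha> \<beta> _ "lincomb k us c"] ab' ab(2)
    by (simp add: transfer_lincomb[symmetric])
  then show "c j = 0"
    using assms \<open>j < k\<close> unfolding trial_family_def linearly_independent_on_def by blast
qed

lemma Sup_rayleigh_range_transfer_le:
  assumes us: "trial_family p \<alpha> \<beta> \<theta> k us" and k: "k \<ge> 1"
    and D: "shift_den \<beta> (cmod (cis (2 * pi * \<delta>) - 1)) > 0"
  defines "\<eta> \<equiv> cmod (cis (2 * pi * \<delta>) - 1)"
  shows "Sup (rayleigh_range p \<alpha> \<beta> k (\<lambda>j. transfer \<alpha> \<beta> (cis (2 * pi * \<delta>) - 1) (us j)))
    \<le> shift_gain \<beta> \<eta> * Sup (rayleigh_range p \<alpha> \<beta> k us) + shift_offset \<alpha> \<beta> M \<eta>"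
proof (rule cSup_least)
  let ?w = "cis (2 * pi * \<delta>) - 1"
  show "rayleigh_range p \<alpha> \<beta> k (\<lambda>j. transfer \<alpha> \<beta> ?w (us j)) \<noteq> {}"
    by (rule rayleigh_range_bounded(2)[OF trial_family_transfer[OF us] k])
  have V: "\<forall>j<k. us j \<in> Vspace p \<alpha> \<beta> \<theta>" and indep: "linearly_independent_on k us"
    using us unfolding trial_family_def by auto
  fix r assume "r \<in> rayleigh_range p \<alpha> \<beta> k (\<lambda>j. transfer \<alpha> \<beta> ?w (us j))"
  then obtain c j where r: "r = rayleigh p \<alpha> \<beta> (transfer \<alpha> \<beta> ?w (lincomb k us c))"
    and j: "j < k" "c j \<noteq> 0"
    unfolding rayleigh_range_def transfer_lincomb by blast
  have "r \<le> shift_gain \<beta> \<eta> * rayleigh p \<alpha> \<beta> (lincomb k us c) + shift_offset \<alpha> \<beta> M \<eta>"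
    unfolding r \<eta>_def
    by (rule rayleigh_transfer_le[OF Vspace_lincomb[OF V p_pos]
          L2_norm_sq_lincomb_pos[where c = c, OF p_pos V indep j] D])
  also have "rayleigh p \<alpha> \<beta> (lincomb k us c) \<le> Sup (rayleigh_range p \<alpha> \<beta> k us)"
    using j unfolding rayleigh_range_def
    by (intro cSup_upper rayleigh_range_bounded(1)[OF us k, unfolded rayleigh_range_def]) blast
  then have "shift_gain \<beta> \<eta> * rayleigh p \<alpha> \<beta> (lincomb k us c) \<le> shift_gain \<beta> \<eta> * Sup (rayleigh_range p \<alpha> \<beta> k us)"
    using D unfolding shift_gain_def \<eta>_def by (intro mult_left_mono) simp_all
  finally show "r \<le> shift_gain \<beta> \<eta> * Sup (rayleigh_range p \<alpha> \<beta> k us) + shift_offset \<alpha> \<beta> M \<eta>"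
    by simp
qed

end

section \<open>Continuity of the eigenvalues\<close>

lemma isCont_of_affine_bounds:
  fixes f A B :: "'a::t2_space \<Rightarrow> real"
  assumes A: "(A \<longlongrightarrow> 1) (at x)" and B: "(B \<longlongrightarrow> 0) (at x)"
    and upper: "\<forall>\<^sub>F y in at x. f y \<le> A y * f x + B y"
    and lower: "\<forall>\<^sub>F y in at x. f x \<le> A y * f y + B y"
  shows "isCont f x"
proof -
  have "\<forall>\<^sub>F y in at x. 0 < A y" using order_tendstoD(1)[OF A zero_less_one] .
  with lower have below: "\<forall>\<^sub>F y in at x. (f x - B y) / A y \<le> f y"
    by eventually_elim (simp add: pos_divide_le_eq mult.commute)
  have "((\<lambda>y. (f x - B y) / A y) \<longlongrightarrow> f x) (at x)"
    using tendsto_divide[OF tendsto_diff[OF tendsto_const B] A] by simp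
  moreover have "((\<lambda>y. A y * f x + B y) \<longlongrightarrow> f x) (at x)"
    using tendsto_add[OF tendsto_mult[OF A tendsto_const] B] by simp
  ultimately have "(f \<longlongrightarrow> f x) (at x)"
    by (rule tendsto_sandwich[OF below upper])
  then show ?thesis unfolding isCont_def .
qed

lemma norm_cis_minus_sub_1: "cmod (cis (- t) - 1) = cmod (cis t - 1)"
proof -
  have "cis (- t) - 1 = cnj (cis t - 1)" by (simp add: cis_cnj)
  then show ?thesis by (simp only: complex_mod_cnj)
qed

context cell_problem
begin

lemma eigenvalue_transfer_le:
  assumes ex: "\<exists>us. trial_family p \<alpha> \<beta> \<theta> k us" and k: "k \<ge> 1"
    and D: "shift_den \<beta> (cmod (cis (2 * pi * \<delta>) - 1)) > 0"
  defines "\<eta> \<equiv> cmod (cis (2 * pi * \<delta>) - 1)"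
  shows "eigenvalue p \<alpha> \<beta> (\<theta> + \<delta>) k
    \<le> shift_gain \<beta> \<eta> * eigenvalue p \<alpha> \<beta> \<theta> k + shift_offset \<alpha> \<beta> M \<eta>"
proof -
  let ?A = "shift_gain \<beta> \<eta>" and ?B = "shift_offset \<alpha> \<beta> M \<eta>"
  let ?S = "\<lambda>\<theta>. {Sup (rayleigh_range p \<alpha> \<beta> k us) | us. trial_family p \<alpha> \<beta> \<theta> k us}"
  have "0 < 1 + \<eta>" unfolding \<eta>_def by (simp add: add_pos_nonneg)
  then have A: "?A > 0" using D unfolding shift_gain_def \<eta>_def by simp
  have "bdd_below (?S (\<theta> + \<delta>))"
    using Sup_rayleigh_range_nonneg[OF _ k] by (intro bdd_belowI[of _ 0]) blast
  then have "(eigenvalue p \<alpha> \<beta> (\<theta> + \<delta>) k - ?B) / ?A \<le> Inf (?S \<theta>)"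
  proof (intro cInf_greatest)
    show "?S \<theta> \<noteq> {}" using ex by blast
    fix s assume "s \<in> ?S \<theta>" and bdd: "bdd_below (?S (\<theta> + \<delta>))"
    then obtain us where s: "s = Sup (rayleigh_range p \<alpha> \<beta> k us)" and us: "trial_family p \<alpha> \<beta> \<theta> k us"
      by blast
    have "eigenvalue p \<alpha> \<beta> (\<theta> + \<delta>) k
        \<le> Sup (rayleigh_range p \<alpha> \<beta> k (\<lambda>j. transfer \<alpha> \<beta> (cis (2 * pi * \<delta>) - 1) (us j)))"
      unfolding eigenvalue_eq using trial_family_transfer[OF us]
      by (intro cInf_lower[OF _ bdd]) blast
    also have "\<dots> \<le> ?A * s + ?B"
      unfolding s \<eta>_def by (rule Sup_rayleigh_range_transfer_le[OF us k D])
    finally show "(eigenvalue p \<alpha> \<beta> (\<theta> + \<delta>) k - ?B) / ?A \<le> s"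
      using A by (simp add: pos_divide_le_eq mult.commute)
  qed
  then show ?thesis using A by (simp add: eigenvalue_eq pos_divide_le_eq mult.commute)
qed

lemma ex_trial_family_shift:
  assumes "\<exists>us. trial_family p \<alpha> \<beta> \<theta> k us"
  shows "\<exists>us. trial_family p \<alpha> \<beta> \<theta>' k us"
  using assms trial_family_transfer[of \<theta> k _ "\<theta>' - \<theta>"] by auto

lemma isCont_eigenvalue:
  assumes ex: "\<exists>us. trial_family p \<alpha> \<beta> \<theta> k us" and k: "k \<ge> 1"
  shows "isCont (\<lambda>\<theta>. eigenvalue p \<alpha> \<beta> \<theta> k) \<theta>\<^sub>0"
proof -
  define \<eta> where "\<eta> \<theta> = cmod (cis (2 * pi * (\<theta> - \<theta>\<^sub>0)) - 1)" for \<theta>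
  have "(\<eta> \<longlongrightarrow> cmod (cis (2 * pi * (\<theta>\<^sub>0 - \<theta>\<^sub>0)) - 1)) (at \<theta>\<^sub>0)"
    unfolding \<eta>_def by (intro tendsto_intros)
  then have \<eta>: "(\<eta> \<longlongrightarrow> 0) (at \<theta>\<^sub>0)" by simp
  note den = tendsto_shift_den[OF \<eta> ab(3)]
  note gain = tendsto_shift_gain[OF \<eta> ab(3)]
  note offset = tendsto_shift_offset[OF \<eta> ab(2,3), of M]
  have D: "\<forall>\<^sub>F \<theta> in at \<theta>\<^sub>0. shift_den \<beta> (\<eta> \<theta>) > 0"
    using order_tendstoD(1)[OF den zero_less_one] .
  have ex_all: "\<exists>us. trial_family p \<alpha> \<beta> \<theta>' k us" for \<theta>'
    using ex_trial_family_shift[OF ex] .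
  show ?thesis
  proof (rule isCont_of_affine_bounds[OF gain offset])
    show "\<forall>\<^sub>F \<theta> in at \<theta>\<^sub>0. eigenvalue p \<alpha> \<beta> \<theta> k
        \<le> shift_gain \<beta> (\<eta> \<theta>) * eigenvalue p \<alpha> \<beta> \<theta>\<^sub>0 k + shift_offset \<alpha> \<beta> M (\<eta> \<theta>)"
      using D
    proof eventually_elim
      case (elim \<theta>)
      then show ?case
        using eigenvalue_transfer_le[OF ex_all k, of "\<theta> - \<theta>\<^sub>0" \<theta>\<^sub>0] by (simp add: \<eta>_def)
    qed
    show "\<forall>\<^sub>F \<theta> in at \<theta>\<^sub>0. eigenvalue p \<alpha> \<beta> \<theta>\<^sub>0 k
        \<le> shift_gain \<beta> (\<eta> \<theta>) * eigenvalue p \<alpha> \<beta> \<theta> k + shift_offset \<alpha> \<beta> M (\<eta> \<theta>)"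
      using D
    proof eventually_elim
      case (elim \<theta>)
      have "cmod (cis (2 * pi * (\<theta>\<^sub>0 - \<theta>)) - 1) = \<eta> \<theta>"
        using norm_cis_minus_sub_1[of "2 * pi * (\<theta> - \<theta>\<^sub>0)"] by (simp add: \<eta>_def algebra_simps)
      then show ?case
        using eigenvalue_transfer_le[OF ex_all k, of "\<theta>\<^sub>0 - \<theta>" \<theta>] elim by simp
    qed
  qed
qed

end

theorem theorem5p2:
  fixes \<alpha> \<beta> :: real and p :: "real \<Rightarrow> real" and k :: nat
  assumes "0 < \<alpha>" and "\<alpha> < \<beta>" and "\<beta> < 1"
    and "p \<in> borel_measurable lebesgue"
    and "\<forall>x. p (x + 1) = p x"
    and "\<forall>x. p x > 0"
    and "\<exists>M. AE x in lebesgue. x \<in> {0<..<1} \<longrightarrow> p x \<le> M \<and> 1 / p x \<le> M"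
    and "k \<ge> 1"
  shows "continuous_on {0..<1} (\<lambda>\<theta>. eigenvalue p \<alpha> \<beta> \<theta> k)"
proof -
  from assms(7) obtain M where "AE x in lebesgue. x \<in> {0<..<1} \<longrightarrow> p x \<le> M \<and> 1 / p x \<le> M"
    by blast
  then have M: "AE x in lebesgue. x \<in> {0<..<1} \<longrightarrow> p x \<le> M"
    by eventually_elim simp
  then interpret cell_problem p \<alpha> \<beta> M
    using assms by unfold_locales auto
  show ?thesis
  proof (cases "\<exists>us. trial_family p \<alpha> \<beta> 0 k us")
    case True
    then show ?thesis
      using isCont_eigenvalue[OF True assms(8)] by (intro continuous_at_imp_continuous_on) blast
  next
    case False
    then have "\<not> (\<exists>us. trial_family p \<alpha> \<beta> \<theta> k us)" for \<theta>
      using ex_trial_family_shift by blast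
    \<comment> \<open>then every \<open>eigenvalue p \<alpha> \<beta> \<theta> k\<close> is the same junk value \<open>Inf {}\<close>\<close>
    then have "eigenvalue p \<alpha> \<beta> \<theta> k = Inf {}" for \<theta>
      by (simp add: eigenvalue_eq)
    then show ?thesis by simp
  qed
qed

end
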